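(* Let $\mathcal a>1$, $\mathcal b>0$, $1<\mathcal c<\tfrac32$, $t_0>0$, $\beta,\beta_0>0$, and let $f\in C^2([t_0,t_m))$ be the solution of $$f''+\frac{\mathcal a}{t}f'-\frac{\mathcal b}{t^2}f(1+f)-\frac{\mathcal c(f')^2}{1+f}=0,\qquad f(t_0)=\beta,\ f'(t_0)=\beta_0,$$ on its maximal interval of existence $[t_0,t_m)$. Let $\theta\ge1$ and $A>0$ with $A\theta<\frac{2\mathcal b}{3-2\mathcal c}$, let $g(t)=\exp\big(-A\int_{t_0}^t\frac{f(s)(1+f(s))}{s^2f'(s)}ds\big)$ and $\eta_\theta(t):=\frac{1}{g(t)^\theta(1+f(t))}$. Then $\eta_\theta\in C^1([t_0,t_m))$, there is $C_\star>0$ with $0<\eta_\theta(t)\le C_\star$ for all $t\in[t_0,t_m)$, and $\lim_{t\to t_m}\eta_\theta(t)=0$ (so $\eta_\theta$ extends continuously to $[t_0,t_m]$ with $\eta_\theta(t_m)=0$).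
   Context: It is known (from prior work) that $t_m\in(t_0,\infty]$, $f>0$, $f'>0$ on $[t_0,t_m)$, $f(t),f'(t)\to+\infty$ as $t\to t_m$, and, if $t_m=\infty$, $1+f(t)>\exp(\mathtt C t^{(\bar{\mathcal a}+\triangle)/2}+\mathtt D t^{-1})$ with $\mathtt C>0$, $\triangle=\sqrt{(1-\mathcal a)^2+4\mathcal b}$, $\bar{\mathcal a}=1-\mathcal a$; and that $\chi(t)=\frac{t^{2-\mathcal a}f'(t)}{(1+f(t))^{2-\mathcal c}f(t)g(t)^{\mathcal b/A}}$ is bounded on $[t_0,t_m)$. *)

theory Defs
  imports "HOL-Analysis.Analysis" "HOL-Library.Extended_Real"
begin

definition ivl :: "real \<Rightarrow> ereal \<Rightarrow> real set" where
  "ivl t0 tm = {t. t0 \<le> t \<and> ereal t < tm}"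

definition ode_sol ::
  "real \<Rightarrow> real \<Rightarrow> real \<Rightarrow> real \<Rightarrow> real \<Rightarrow> real \<Rightarrow> real set \<Rightarrow> (real \<Rightarrow> real) \<Rightarrow> bool" where
  "ode_sol a b c t0 \<beta> \<beta>0 T h \<longleftrightarrow>
     (\<exists>h1 h2. (\<forall>t\<in>T. (h has_real_derivative h1 t) (at t within T)
                  \<and> (h1 has_real_derivative h2 t) (at t within T)
                  \<and> h2 t + a / t * h1 t - b / t\<^sup>2 * h t * (1 + h t)
                       - c * (h1 t)\<^sup>2 / (1 + h t) = 0)
       \<and> continuous_on T h2 \<and> h t0 = \<beta> \<and> h1 t0 = \<beta>0)"

definition to_tm :: "ereal \<Rightarrow> real filter" where
  "to_tm tm = (if tm = \<infinity> then at_top else at_left (real_of_ereal tm))"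

end

theory Submission
  imports Defs
begin

text \<open>The solution is increasing, and on \<open>[s, t]\<close> the energy \<open>t^(2a) f1^2 / (1 + f)^(2c)\<close> gains
  at least \<open>2 b s^(2a - 2)\<close> times the increment of an antiderivative of \<open>f (1 + f)^(1 - 2c)\<close>.
  Hence, once \<open>1 + f\<close> has grown by a large factor between \<open>l t\<close> and \<open>t\<close>, \<open>(t f1)^2\<close> dominates
  \<open>(1 + f)^3\<close> with a constant arbitrarily close to \<open>2 b / (3 - 2c)\<close>. Such growth holds eventually
  because \<open>f \<rightarrow> \<infinity>\<close>: for \<open>tm = \<infinity>\<close> since \<open>t f1 / (1 + f) \<rightarrow> \<infinity>\<close>, for finite \<open>tm\<close> since a
  bounded solution could be continued past \<open>tm\<close> (local existence and gluing), contradicting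
  maximality. As \<open>A \<theta> < 2 b / (3 - 2c)\<close>, the integrand \<open>A \<theta> f (1 + f) / (t^2 f1)\<close> of \<open>- \<theta> ln g\<close>
  is then eventually below \<open>(1 - \<epsilon>) (ln (1 + f))'\<close>, so \<open>\<eta> = g^(- \<theta>) / (1 + f)\<close> is eventually
  bounded by a multiple of \<open>(1 + f)^(- \<epsilon>) \<rightarrow> 0\<close>.\<close>

lemma ivl_ereal: "ivl t0 (ereal T) = {t0..<T}"
  by (auto simp: ivl_def)

lemma atLeastAtMost_subset_ivl:
  assumes "x \<in> ivl t0 tm" "y \<in> ivl t0 tm" shows "{x..y} \<subseteq> ivl t0 tm"
  using assms le_less_trans[of _ "ereal y" tm] by (auto simp: ivl_def)

lemma interior_ivl:
  assumes "t \<in> ivl t0 tm" "t0 < t" shows "t \<in> interior (ivl t0 tm)"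
proof -
  from assms have "ereal t < tm" by (simp add: ivl_def)
  then obtain r where r: "ereal t < ereal r" "ereal r < tm" using ereal_dense2 by blast
  have "{t0<..<r} \<subseteq> ivl t0 tm"
  proof
    fix x assume "x \<in> {t0<..<r}"
    then have "ereal x < ereal r" "t0 \<le> x" by auto
    then show "x \<in> ivl t0 tm" using r(2) less_trans unfolding ivl_def by blast
  qed
  moreover have "t \<in> {t0<..<r}" using r assms by auto
  ultimately show ?thesis by (meson interior_maximal open_greaterThanLessThan interiorI)
qed

lemma has_real_derivative_at_ivl:
  assumes "(F has_real_derivative D) (at t within ivl t0 tm)" "t \<in> ivl t0 tm" "t0 < t"
  shows "(F has_real_derivative D) (at t)"
  using assms at_within_interior[OF interior_ivl[OF assms(2,3)]] by simp

lemma ivl_deriv_nonneg_imp_le: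
  assumes deriv: "\<And>t. t \<in> ivl t0 tm \<Longrightarrow> (F has_real_derivative F' t) (at t within ivl t0 tm)"
    and x: "x \<in> ivl t0 tm" and y: "y \<in> ivl t0 tm" and "x \<le> y"
    and nonneg: "\<And>t. x < t \<Longrightarrow> t < y \<Longrightarrow> F' t \<ge> 0"
  shows "F x \<le> F y"
proof (rule DERIV_nonneg_imp_increasing_open[OF \<open>x \<le> y\<close>])
  have sub: "{x..y} \<subseteq> ivl t0 tm" using atLeastAtMost_subset_ivl[OF x y] .
  show "continuous_on {x..y} F"
    using DERIV_continuous_on[OF deriv] sub continuous_on_subset by blast
  fix t assume t: "x < t" "t < y"
  have "t \<in> ivl t0 tm" using sub t by auto
  moreover have "t0 < t" using x t by (simp add: ivl_def)
  ultimately have "(F has_real_derivative F' t) (at t)"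
    using deriv has_real_derivative_at_ivl by blast
  then show "\<exists>D. (F has_real_derivative D) (at t) \<and> 0 \<le> D"
    using nonneg t by auto
qed

lemma eventually_to_tm_iff:
  assumes "ereal t0 < tm"
  shows "eventually P (to_tm tm) \<longleftrightarrow> (\<exists>T\<in>ivl t0 tm. \<forall>t\<in>ivl t0 tm. T \<le> t \<longrightarrow> P t)"
proof (cases tm)
  case PInf
  show ?thesis
  proof
    assume "eventually P (to_tm tm)"
    then have "eventually P at_top" using PInf by (simp add: to_tm_def)
    then obtain N where "\<And>t. N \<le> t \<Longrightarrow> P t" by (auto simp: eventually_at_top_linorder)
    then show "\<exists>T\<in>ivl t0 tm. \<forall>t\<in>ivl t0 tm. T \<le> t \<longrightarrow> P t"
      using PInf by (intro bexI[of _ "max N t0"]) (auto simp: ivl_def)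
  next
    assume "\<exists>T\<in>ivl t0 tm. \<forall>t\<in>ivl t0 tm. T \<le> t \<longrightarrow> P t"
    then obtain T where "t0 \<le> T" "\<And>t. t0 \<le> t \<Longrightarrow> T \<le> t \<Longrightarrow> P t"
      using PInf by (auto simp: ivl_def)
    then have "eventually P at_top"
      unfolding eventually_at_top_linorder by (meson order_trans)
    then show "eventually P (to_tm tm)" using PInf by (simp add: to_tm_def)
  qed
next
  case (real T')
  then have "t0 < T'" using assms by simp
  show ?thesis
  proof
    assume "eventually P (to_tm tm)"
    then have "eventually P (at_left T')" using real by (simp add: to_tm_def)
    then obtain b where b: "b < T'" "\<And>y. b < y \<Longrightarrow> y < T' \<Longrightarrow> P y"
      unfolding eventually_at_left_field by auto
    have "max t0 ((b + T') / 2) \<in> ivl t0 tm" using real b \<open>t0 < T'\<close> by (simp add: ivl_def)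
    moreover have "P t" if "t \<in> ivl t0 tm" "max t0 ((b + T') / 2) \<le> t" for t
      using that real b by (intro b(2)) (auto simp: ivl_def)
    ultimately show "\<exists>T\<in>ivl t0 tm. \<forall>t\<in>ivl t0 tm. T \<le> t \<longrightarrow> P t" by blast
  next
    assume "\<exists>T\<in>ivl t0 tm. \<forall>t\<in>ivl t0 tm. T \<le> t \<longrightarrow> P t"
    then obtain T where T: "T \<in> ivl t0 tm" "\<And>t. t \<in> ivl t0 tm \<Longrightarrow> T \<le> t \<Longrightarrow> P t" by blast
    then have "T < T'" using real by (simp add: ivl_def)
    moreover have "P t" if "T < t" "t < T'" for t
      using that T real by (intro T(2)) (auto simp: ivl_def)
    ultimately have "eventually P (at_left T')" unfolding eventually_at_left_field by blast
    then show "eventually P (to_tm tm)" using real by (simp add: to_tm_def)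
  qed
qed (use assms in simp)

lemma eventually_in_ivl_to_tm:
  assumes "ereal t0 < tm" shows "eventually (\<lambda>t. t \<in> ivl t0 tm) (to_tm tm)"
  unfolding eventually_to_tm_iff[OF assms] using assms by (intro bexI[of _ t0]) (auto simp: ivl_def)

section \<open>Local existence for the ODE\<close>

lemma continuous_on_compose_param:
  assumes "continuous_on (S \<times> UNIV) (\<lambda>(s, p). F s p)" "continuous_on S Y"
  shows "continuous_on S (\<lambda>s. F s (Y s))"
proof -
  have "continuous_on S ((\<lambda>(s, p). F s p) \<circ> (\<lambda>s. (s, Y s)))"
    by (rule continuous_on_compose[OF _ continuous_on_subset[OF assms(1)]])
      (use assms(2) in \<open>auto intro!: continuous_intros\<close>)
  then show ?thesis by (simp add: o_def)
qed

lemma norm_integral_le_length: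
  fixes g :: "real \<Rightarrow> 'a::banach"
  assumes "x \<in> {T..T+\<delta>}" "g integrable_on {T..x}" "\<And>s. s \<in> {T..x} \<Longrightarrow> norm (g s) \<le> B" "0 \<le> B"
  shows "norm (integral {T..x} g) \<le> B * \<delta>"
proof -
  have "norm (integral {T..x} g) \<le> B * Henstock_Kurzweil_Integration.content {T..x}"
    using has_integral_bound_real[OF assms(4) finite.emptyI integrable_integral[OF assms(2)]] assms(3)
    by auto
  also have "\<dots> \<le> B * \<delta>" using assms(1,4) by (intro mult_left_mono) auto
  finally show ?thesis .
qed

text \<open>The Picard operator acts on bounded continuous functions on the whole line, which are
  read through the clamp of the time variable to \<open>[T, T + \<delta>]\<close>.\<close>
lemma picard_integral_equation:
  fixes F :: "real \<Rightarrow> 'a::banach \<Rightarrow> 'a" and Y0 :: 'a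
  assumes \<delta>: "0 < \<delta>"
    and cont: "continuous_on ({T..T+\<delta>} \<times> UNIV) (\<lambda>(s, p). F s p)"
    and bound: "\<And>s p. s \<in> {T..T+\<delta>} \<Longrightarrow> norm (F s p) \<le> K0"
    and lip: "\<And>s p q. s \<in> {T..T+\<delta>} \<Longrightarrow> norm (F s p - F s q) \<le> K1 * norm (p - q)"
    and K1: "0 \<le> K1" "\<delta> * K1 < 1"
  obtains Y where "continuous_on {T..T+\<delta>} Y"
    "\<And>t. t \<in> {T..T+\<delta>} \<Longrightarrow> Y t = Y0 + integral {T..t} (\<lambda>s. F s (Y s))"
proof -
  have K0: "0 \<le> K0" using order_trans[OF norm_ge_zero bound[of T Y0]] \<delta> by simp
  define clT where "clT t = max T (min (T+\<delta>) t)" for t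
  have clT_in: "clT t \<in> {T..T+\<delta>}" for t unfolding clT_def using \<delta> by auto
  have FY_int: "(\<lambda>s. F s (apply_bcontfun Y s)) integrable_on {T..x}" if "x \<in> {T..T+\<delta>}" for Y x
    using that by (intro integrable_continuous_interval continuous_on_subset[OF
        continuous_on_compose_param[OF cont continuous_on_apply_bcontfun]]) auto
  define \<phi> where "\<phi> Y t = Y0 + integral {T..clT t} (\<lambda>s. F s (apply_bcontfun Y s))" for Y t
  have \<phi>_bcontfun: "\<phi> Y \<in> bcontfun" for Y
  proof (rule bcontfun_normI)
    have "continuous_on {T..T+\<delta>} (\<lambda>x. integral {T..x} (\<lambda>s. F s (apply_bcontfun Y s)))"
      by (rule indefinite_integral_continuous_1[OF FY_int]) (use \<delta> in auto)
    then have "continuous_on UNIV (\<lambda>t. integral {T..clT t} (\<lambda>s. F s (apply_bcontfun Y s)))"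
      by (rule continuous_on_compose2) (use clT_in in \<open>auto simp: clT_def intro!: continuous_intros\<close>)
    then show "continuous_on UNIV (\<phi> Y)" unfolding \<phi>_def[abs_def] by (intro continuous_intros)
    fix t
    have "norm (integral {T..clT t} (\<lambda>s. F s (apply_bcontfun Y s))) \<le> K0 * \<delta>"
      by (rule norm_integral_le_length[OF clT_in FY_int[OF clT_in]])
        (use K0 clT_in[of t] in \<open>auto intro!: bound\<close>)
    then show "norm (\<phi> Y t) \<le> norm Y0 + K0 * \<delta>"
      unfolding \<phi>_def by (rule order_trans[OF norm_triangle_ineq add_left_mono])
  qed
  define \<Phi> where "\<Phi> Y = Bcontfun (\<phi> Y)" for Y
  have \<Phi>_apply: "apply_bcontfun (\<Phi> Y) = \<phi> Y" for Y
    unfolding \<Phi>_def using \<phi>_bcontfun by (rule Bcontfun_inverse)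
  have "dist (\<Phi> Y) (\<Phi> Y') \<le> (\<delta> * K1) * dist Y Y'" for Y Y'
  proof (rule dist_bound)
    fix t
    have "dist (\<Phi> Y t) (\<Phi> Y' t)
        = norm (integral {T..clT t} (\<lambda>s. F s (apply_bcontfun Y s) - F s (apply_bcontfun Y' s)))"
      unfolding \<Phi>_apply \<phi>_def dist_norm
      using integral_diff[OF FY_int[OF clT_in] FY_int[OF clT_in]] by simp
    also have "\<dots> \<le> (K1 * dist Y Y') * \<delta>"
    proof (rule norm_integral_le_length[OF clT_in integrable_diff[OF FY_int[OF clT_in] FY_int[OF clT_in]]])
      fix s assume "s \<in> {T..clT t}"
      then have "s \<in> {T..T+\<delta>}" using clT_in[of t] by auto
      then have "norm (F s (apply_bcontfun Y s) - F s (apply_bcontfun Y' s))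
          \<le> K1 * norm (apply_bcontfun Y s - apply_bcontfun Y' s)"
        by (rule lip)
      also have "\<dots> \<le> K1 * dist Y Y'"
        using dist_bounded[of Y s Y'] K1 unfolding dist_norm by (intro mult_left_mono) auto
      finally show "norm (F s (apply_bcontfun Y s) - F s (apply_bcontfun Y' s)) \<le> K1 * dist Y Y'" .
    qed (use K1 in simp)
    finally show "dist (\<Phi> Y t) (\<Phi> Y' t) \<le> (\<delta> * K1) * dist Y Y'" by (simp add: algebra_simps)
  qed
  then obtain Yf where fixp: "\<Phi> Yf = Yf"
    using banach_fix_type[of "\<delta> * K1" \<Phi>] \<delta> K1 by auto
  show ?thesis
  proof (rule that[of "apply_bcontfun Yf"])
    show "continuous_on {T..T+\<delta>} (apply_bcontfun Yf)" by simp
    fix t assume "t \<in> {T..T+\<delta>}"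
    then have "clT t = t" unfolding clT_def by auto
    then show "Yf t = Y0 + integral {T..t} (\<lambda>s. F s (Yf s))"
      using \<Phi>_apply[of Yf] fixp unfolding \<phi>_def by metis
  qed
qed

lemma picard_lindelof_global:
  fixes F :: "real \<Rightarrow> 'a::banach \<Rightarrow> 'a" and Y0 :: 'a
  assumes \<delta>: "0 < \<delta>"
    and cont: "continuous_on ({T..T+\<delta>} \<times> UNIV) (\<lambda>(s, p). F s p)"
    and bound: "\<And>s p. s \<in> {T..T+\<delta>} \<Longrightarrow> norm (F s p) \<le> K0"
    and lip: "\<And>s p q. s \<in> {T..T+\<delta>} \<Longrightarrow> norm (F s p - F s q) \<le> K1 * norm (p - q)"
    and K1: "0 \<le> K1" "\<delta> * K1 < 1"
  obtains Y where "Y T = Y0"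
    "\<And>t. t \<in> {T..T+\<delta>} \<Longrightarrow> (Y has_vector_derivative F t (Y t)) (at t within {T..T+\<delta>})"
    "\<And>t. t \<in> {T..T+\<delta>} \<Longrightarrow> norm (Y t - Y0) \<le> \<delta> * K0"
proof -
  obtain Y where Y_cont: "continuous_on {T..T+\<delta>} Y"
    and Y_eq: "\<And>t. t \<in> {T..T+\<delta>} \<Longrightarrow> Y t = Y0 + integral {T..t} (\<lambda>s. F s (Y s))"
    using picard_integral_equation[OF assms] by blast
  have G_cont: "continuous_on {T..T+\<delta>} (\<lambda>s. F s (Y s))"
    by (rule continuous_on_compose_param[OF cont Y_cont])
  have K0: "0 \<le> K0" using order_trans[OF norm_ge_zero bound[of T Y0]] \<delta> by simp
  show ?thesis
  proof (rule that)
    show "Y T = Y0" using Y_eq[of T] \<delta> by simp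
    fix t assume t: "t \<in> {T..T+\<delta>}"
    have "((\<lambda>u. Y0 + integral {T..u} (\<lambda>s. F s (Y s))) has_vector_derivative F t (Y t))
        (at t within {T..T+\<delta>})"
      using integral_has_vector_derivative[OF G_cont t]
      by (rule has_vector_derivative_add[OF has_vector_derivative_const, simplified])
    then show "(Y has_vector_derivative F t (Y t)) (at t within {T..T+\<delta>})"
      using has_vector_derivative_transform[OF t, of Y "\<lambda>u. Y0 + integral {T..u} (\<lambda>s. F s (Y s))"] Y_eq
      by blast
    have "norm (integral {T..t} (\<lambda>s. F s (Y s))) \<le> K0 * \<delta>"
      using t K0 bound
      by (intro norm_integral_le_length integrable_continuous_interval continuous_on_subset[OF G_cont]) auto
    then show "norm (Y t - Y0) \<le> \<delta> * K0" using Y_eq[OF t] by (simp add: mult.commute)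
  qed
qed

definition ode_rhs :: "real \<Rightarrow> real \<Rightarrow> real \<Rightarrow> real \<Rightarrow> real \<Rightarrow> real \<Rightarrow> real" where
  "ode_rhs a b c s y z = - a / s * z + b / s\<^sup>2 * y * (1 + y) + c * z\<^sup>2 / (1 + y)"

lemma abs_diff_quadratic_le:
  fixes y y' Y :: real
  assumes "\<bar>y\<bar> \<le> Y" "\<bar>y'\<bar> \<le> Y"
  shows "\<bar>y * (1 + y) - y' * (1 + y')\<bar> \<le> (1 + 2 * Y) * \<bar>y - y'\<bar>"
proof -
  have "y * (1 + y) - y' * (1 + y') = (1 + y + y') * (y - y')" by (simp add: algebra_simps)
  then have "\<bar>y * (1 + y) - y' * (1 + y')\<bar> = \<bar>1 + y + y'\<bar> * \<bar>y - y'\<bar>" by (simp add: abs_mult)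
  also have "\<dots> \<le> (1 + 2 * Y) * \<bar>y - y'\<bar>" using assms by (intro mult_right_mono) auto
  finally show ?thesis .
qed

lemma abs_diff_square_div_le:
  fixes y y' z z' L Z :: real
  assumes "L > 0" "1 + y \<ge> L" "1 + y' \<ge> L" "\<bar>z\<bar> \<le> Z" "\<bar>z'\<bar> \<le> Z"
  shows "\<bar>z\<^sup>2 / (1 + y) - z'\<^sup>2 / (1 + y')\<bar> \<le> 2 * Z / L * \<bar>z - z'\<bar> + Z\<^sup>2 / L\<^sup>2 * \<bar>y - y'\<bar>"
proof -
  have u: "1 + y > 0" "1 + y' > 0" using assms by auto
  have split: "z\<^sup>2 / (1 + y) - z'\<^sup>2 / (1 + y')
      = (z + z') * (z - z') / (1 + y) + z'\<^sup>2 * (y' - y) / ((1 + y) * (1 + y'))"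
  proof -
    have "z\<^sup>2 / u - z'\<^sup>2 / u' = (z + z') * (z - z') / u + z'\<^sup>2 * (u' - u) / (u * u')"
      if "u \<noteq> 0" "u' \<noteq> 0" for u u' :: real
      using that by (simp add: field_simps power2_eq_square)
    then show ?thesis using u by simp
  qed
  have "\<bar>(z + z') * (z - z') / (1 + y)\<bar> = \<bar>z + z'\<bar> * \<bar>z - z'\<bar> / (1 + y)"
    using u by (simp add: abs_mult)
  also have "\<dots> \<le> (2 * Z) * \<bar>z - z'\<bar> / L"
    using assms u by (intro frac_le mult_right_mono) auto
  finally have t1: "\<bar>(z + z') * (z - z') / (1 + y)\<bar> \<le> 2 * Z / L * \<bar>z - z'\<bar>" by simp
  have "z'\<^sup>2 \<le> Z\<^sup>2" using assms(5) by (metis abs_ge_zero power2_abs power_mono)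
  have "\<bar>z'\<^sup>2 * (y' - y) / ((1 + y) * (1 + y'))\<bar> = z'\<^sup>2 * \<bar>y - y'\<bar> / ((1 + y) * (1 + y'))"
    using u by (simp add: abs_mult abs_minus_commute)
  also have "\<dots> \<le> Z\<^sup>2 * \<bar>y - y'\<bar> / L\<^sup>2"
    using assms u \<open>z'\<^sup>2 \<le> Z\<^sup>2\<close> unfolding power2_eq_square[of L]
    by (intro frac_le mult_right_mono mult_mono) auto
  finally have t2: "\<bar>z'\<^sup>2 * (y' - y) / ((1 + y) * (1 + y'))\<bar> \<le> Z\<^sup>2 / L\<^sup>2 * \<bar>y - y'\<bar>" by simp
  show ?thesis unfolding split using abs_triangle_ineq t1 t2 by (rule order_trans[OF _ add_mono])
qed

lemma ode_rhs_lipschitz: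
  assumes T: "0 < T" and abc: "0 \<le> a" "0 \<le> b" "0 \<le> c" and L1: "0 < L1"
  obtains K where "0 \<le> K"
    "\<And>s y y' z z'. T \<le> s \<Longrightarrow> \<bar>y - L1\<bar> \<le> 1 \<Longrightarrow> \<bar>y' - L1\<bar> \<le> 1 \<Longrightarrow> \<bar>z - L2\<bar> \<le> 1 \<Longrightarrow> \<bar>z' - L2\<bar> \<le> 1 \<Longrightarrow>
       \<bar>ode_rhs a b c s y z - ode_rhs a b c s y' z'\<bar> \<le> K * (\<bar>y - y'\<bar> + \<bar>z - z'\<bar>)"
proof -
  define Y Z where "Y = \<bar>L1\<bar> + 1" and "Z = \<bar>L2\<bar> + 1"
  define Ky Kz where "Ky = b / T\<^sup>2 * (1 + 2 * Y) + c * (Z\<^sup>2 / L1\<^sup>2)" and "Kz = a / T + c * (2 * Z / L1)"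
  have K: "0 \<le> Ky" "0 \<le> Kz" unfolding Ky_def Kz_def Y_def Z_def using T abc L1 by auto
  show ?thesis
  proof (rule that[of "Ky + Kz"])
    show "0 \<le> Ky + Kz" using K by simp
    fix s y y' z z' assume s: "T \<le> s" and box: "\<bar>y - L1\<bar> \<le> 1" "\<bar>y' - L1\<bar> \<le> 1" "\<bar>z - L2\<bar> \<le> 1" "\<bar>z' - L2\<bar> \<le> 1"
    have "a / s * z - a / s * z' = a / s * (z - z')" by (simp add: right_diff_distrib)
    then have "\<bar>a / s * z - a / s * z'\<bar> = a / s * \<bar>z - z'\<bar>"
      using s T abc by (simp add: abs_mult)
    also have "\<dots> \<le> a / T * \<bar>z - z'\<bar>" using s T abc by (intro mult_right_mono divide_left_mono) auto
    finally have h1: "\<bar>a / s * z - a / s * z'\<bar> \<le> a / T * \<bar>z - z'\<bar>" .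
    have "b / s\<^sup>2 * y * (1 + y) - b / s\<^sup>2 * y' * (1 + y') = b / s\<^sup>2 * (y * (1 + y) - y' * (1 + y'))"
      by (simp add: algebra_simps)
    then have "\<bar>b / s\<^sup>2 * y * (1 + y) - b / s\<^sup>2 * y' * (1 + y')\<bar> = b / s\<^sup>2 * \<bar>y * (1 + y) - y' * (1 + y')\<bar>"
      using abc by (simp add: abs_mult)
    also have "\<dots> \<le> b / T\<^sup>2 * ((1 + 2 * Y) * \<bar>y - y'\<bar>)"
      using s T abc box abs_diff_quadratic_le[of y Y y'] unfolding Y_def
      by (intro mult_mono divide_left_mono power_mono) auto
    finally have h2: "\<bar>b / s\<^sup>2 * y * (1 + y) - b / s\<^sup>2 * y' * (1 + y')\<bar> \<le> b / T\<^sup>2 * (1 + 2 * Y) * \<bar>y - y'\<bar>"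
      by simp
    have "\<bar>c * z\<^sup>2 / (1 + y) - c * z'\<^sup>2 / (1 + y')\<bar> = c * \<bar>z\<^sup>2 / (1 + y) - z'\<^sup>2 / (1 + y')\<bar>"
      using abc by (simp add: abs_mult flip: right_diff_distrib times_divide_eq_right)
    also have "\<dots> \<le> c * (2 * Z / L1 * \<bar>z - z'\<bar> + Z\<^sup>2 / L1\<^sup>2 * \<bar>y - y'\<bar>)"
      using abc L1 box unfolding Z_def by (intro mult_left_mono abs_diff_square_div_le) auto
    finally have h3: "\<bar>c * z\<^sup>2 / (1 + y) - c * z'\<^sup>2 / (1 + y')\<bar>
        \<le> c * (2 * Z / L1 * \<bar>z - z'\<bar> + Z\<^sup>2 / L1\<^sup>2 * \<bar>y - y'\<bar>)" .
    have "ode_rhs a b c s y z - ode_rhs a b c s y' z' = - (a / s * z - a / s * z')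
        + (b / s\<^sup>2 * y * (1 + y) - b / s\<^sup>2 * y' * (1 + y')) + (c * z\<^sup>2 / (1 + y) - c * z'\<^sup>2 / (1 + y'))"
      unfolding ode_rhs_def by simp
    then have "\<bar>ode_rhs a b c s y z - ode_rhs a b c s y' z'\<bar>
        \<le> a / T * \<bar>z - z'\<bar> + b / T\<^sup>2 * (1 + 2 * Y) * \<bar>y - y'\<bar>
          + c * (2 * Z / L1 * \<bar>z - z'\<bar> + Z\<^sup>2 / L1\<^sup>2 * \<bar>y - y'\<bar>)"
      using h1 h2 h3 by linarith
    also have "\<dots> = Ky * \<bar>y - y'\<bar> + Kz * \<bar>z - z'\<bar>"
      unfolding Ky_def Kz_def by (simp add: algebra_simps)
    also have "\<dots> \<le> (Ky + Kz) * (\<bar>y - y'\<bar> + \<bar>z - z'\<bar>)"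
      using K by (simp add: algebra_simps)
    finally show "\<bar>ode_rhs a b c s y z - ode_rhs a b c s y' z'\<bar> \<le> (Ky + Kz) * (\<bar>y - y'\<bar> + \<bar>z - z'\<bar>)" .
  qed
qed

lemma abs_fst_le_norm: "\<bar>fst w\<bar> \<le> norm (w :: real \<times> real)"
  using norm_fst_le[of "fst w" "snd w"] by simp

lemma abs_snd_le_norm: "\<bar>snd w\<bar> \<le> norm (w :: real \<times> real)"
  using norm_snd_le[of "snd w" "fst w"] by simp

definition ode_field :: "real \<Rightarrow> real \<Rightarrow> real \<Rightarrow> real \<Rightarrow> real \<times> real \<Rightarrow> real \<times> real" where
  "ode_field a b c s p = (snd p, ode_rhs a b c s (fst p) (snd p))"

definition unit_box :: "real \<times> real \<Rightarrow> (real \<times> real) set" where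
  "unit_box p0 = cbox (p0 - (1, 1)) (p0 + (1, 1))"

lemma mem_unit_box: "p \<in> unit_box p0 \<longleftrightarrow> \<bar>fst p - fst p0\<bar> \<le> 1 \<and> \<bar>snd p - snd p0\<bar> \<le> 1"
  unfolding unit_box_def by (cases p, cases p0) (auto simp: cbox_Pair_eq abs_le_iff)

lemma ode_field_lipschitz:
  assumes T: "0 < T" and abc: "0 \<le> a" "0 \<le> b" "0 \<le> c" and L1: "0 < L1"
  obtains K where "0 \<le> K" "\<And>s u v. T \<le> s \<Longrightarrow> u \<in> unit_box (L1, L2) \<Longrightarrow> v \<in> unit_box (L1, L2) \<Longrightarrow>
    norm (ode_field a b c s u - ode_field a b c s v) \<le> K * norm (u - v)"
proof -
  obtain K where K: "0 \<le> K" and lip: "\<And>s y y' z z'. T \<le> s \<Longrightarrow> \<bar>y - L1\<bar> \<le> 1 \<Longrightarrow> \<bar>y' - L1\<bar> \<le> 1 \<Longrightarrow>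
      \<bar>z - L2\<bar> \<le> 1 \<Longrightarrow> \<bar>z' - L2\<bar> \<le> 1 \<Longrightarrow>
      \<bar>ode_rhs a b c s y z - ode_rhs a b c s y' z'\<bar> \<le> K * (\<bar>y - y'\<bar> + \<bar>z - z'\<bar>)"
    using ode_rhs_lipschitz[OF T abc L1] by blast
  show ?thesis
  proof (rule that[of "1 + 2 * K"])
    show "0 \<le> 1 + 2 * K" using K by simp
    fix s u v assume s: "T \<le> s" and uv: "u \<in> unit_box (L1, L2)" "v \<in> unit_box (L1, L2)"
    have fst_le: "\<bar>fst u - fst v\<bar> \<le> norm (u - v)" and snd_le: "\<bar>snd u - snd v\<bar> \<le> norm (u - v)"
      using abs_fst_le_norm[of "u - v"] abs_snd_le_norm[of "u - v"] by simp_all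
    have "\<bar>ode_rhs a b c s (fst u) (snd u) - ode_rhs a b c s (fst v) (snd v)\<bar>
        \<le> K * (\<bar>fst u - fst v\<bar> + \<bar>snd u - snd v\<bar>)"
      using lip[OF s] uv unfolding mem_unit_box by auto
    also have "\<dots> \<le> K * (2 * norm (u - v))" using fst_le snd_le K by (intro mult_left_mono) auto
    finally have rhs_le: "\<bar>ode_rhs a b c s (fst u) (snd u) - ode_rhs a b c s (fst v) (snd v)\<bar>
        \<le> K * (2 * norm (u - v))" .
    have "ode_field a b c s u - ode_field a b c s v
        = (snd u - snd v, ode_rhs a b c s (fst u) (snd u) - ode_rhs a b c s (fst v) (snd v))"
      unfolding ode_field_def by simp
    then have "norm (ode_field a b c s u - ode_field a b c s v)
        \<le> \<bar>snd u - snd v\<bar> + \<bar>ode_rhs a b c s (fst u) (snd u) - ode_rhs a b c s (fst v) (snd v)\<bar>"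
      using norm_Pair_le by (metis real_norm_def)
    with rhs_le snd_le show "norm (ode_field a b c s u - ode_field a b c s v) \<le> (1 + 2 * K) * norm (u - v)"
      by (simp add: algebra_simps)
  qed
qed

lemma ode_field_continuous:
  assumes "0 < T" "0 < L1"
  shows "continuous_on ({T..T+1} \<times> unit_box (L1, L2)) (\<lambda>(s, p). ode_field a b c s p)"
  unfolding ode_field_def ode_rhs_def case_prod_beta
  by (intro continuous_intros) (use assms in \<open>auto simp: mem_unit_box abs_le_iff\<close>)

text \<open>Clamping the state to the box makes the field globally Lipschitz; the solution of the
  clamped system stays in the box for a short time, where the clamp is the identity.\<close>
lemma ode_rhs_local_solution:
  assumes T: "0 < T" and abc: "0 \<le> a" "0 \<le> b" "0 \<le> c" and L1: "0 < L1"
  obtains \<delta> y z where "0 < \<delta>" "y T = L1" "z T = L2"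
    "\<And>t. t \<in> {T..T+\<delta>} \<Longrightarrow> (y has_real_derivative z t) (at t within {T..T+\<delta>})"
    "\<And>t. t \<in> {T..T+\<delta>} \<Longrightarrow> (z has_real_derivative ode_rhs a b c t (y t) (z t)) (at t within {T..T+\<delta>})"
    "\<And>t. t \<in> {T..T+\<delta>} \<Longrightarrow> \<bar>y t - L1\<bar> \<le> 1"
proof -
  let ?B = "unit_box (L1, L2)"
  define cl where "cl = clamp ((L1, L2) - (1, 1)) ((L1, L2) + (1, 1))"
  have cl_B: "cl p \<in> ?B" for p
    unfolding cl_def unit_box_def by (rule clamp_in_interval) (auto simp: Basis_prod_def)
  have cl_id: "p \<in> ?B \<Longrightarrow> cl p = p" for p unfolding cl_def unit_box_def by simp
  have cl_cont: "continuous_on UNIV cl"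
    using clamp_continuous_on[of _ _ "\<lambda>x. x" UNIV] unfolding cl_def by simp
  define F where "F s p = ode_field a b c s (cl p)" for s p
  obtain K where K: "0 \<le> K" and lip: "\<And>s u v. T \<le> s \<Longrightarrow> u \<in> ?B \<Longrightarrow> v \<in> ?B \<Longrightarrow>
      norm (ode_field a b c s u - ode_field a b c s v) \<le> K * norm (u - v)"
    using ode_field_lipschitz[OF T abc L1] by blast
  have F_lip: "norm (F s p - F s q) \<le> K * norm (p - q)" if "T \<le> s" for s p q
    using lip[OF that cl_B cl_B] dist_clamps_le_dist_args[of _ _ p q] K unfolding F_def cl_def dist_norm
    by (meson mult_left_mono order_trans)
  obtain M where M: "\<And>s p. s \<in> {T..T+1} \<Longrightarrow> p \<in> ?B \<Longrightarrow> norm (ode_field a b c s p) \<le> M"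
    using compact_imp_bounded[OF compact_continuous_image[OF ode_field_continuous[OF T L1]]]
      compact_Times[of "{T..T+1}" ?B]
    unfolding bounded_iff unit_box_def by force
  have "norm (ode_field a b c T (L1, L2)) \<le> M" by (rule M) (simp_all add: mem_unit_box)
  then have M0: "0 \<le> M" using norm_ge_zero order_trans by blast
  define \<delta> where "\<delta> = min 1 (min (1 / (M + 1)) (1 / (2 * K + 1)))"
  have \<delta>: "0 < \<delta>" "\<delta> \<le> 1" unfolding \<delta>_def using M0 K by auto
  have "\<delta> * M \<le> 1 / (M + 1) * M" unfolding \<delta>_def using M0 by (intro mult_right_mono) auto
  also have "\<dots> \<le> 1" using M0 by (simp add: field_simps)
  finally have \<delta>M: "\<delta> * M \<le> 1" .
  have "\<delta> * K \<le> 1 / (2 * K + 1) * K" unfolding \<delta>_def using K by (intro mult_right_mono) auto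
  also have "\<dots> < 1" using K by (simp add: field_simps)
  finally have \<delta>K: "\<delta> * K < 1" .
  have F_bound: "norm (F s p) \<le> M" if "s \<in> {T..T+\<delta>}" for s p
    unfolding F_def using that \<delta> cl_B by (intro M) auto
  have F_cont: "continuous_on ({T..T+\<delta>} \<times> UNIV) (\<lambda>(s, p). F s p)"
  proof -
    have "continuous_on ({T..T+\<delta>} \<times> UNIV) ((\<lambda>(s, p). ode_field a b c s p) \<circ> (\<lambda>x. (fst x, cl (snd x))))"
      by (rule continuous_on_compose[OF _ continuous_on_subset[OF ode_field_continuous[OF T L1]]])
        (use \<delta> cl_B in \<open>auto intro!: continuous_intros continuous_on_compose2[OF cl_cont]\<close>)
    then show ?thesis unfolding F_def by (simp add: o_def case_prod_beta)
  qed
  obtain Y where Y0: "Y T = (L1, L2)"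
    and Y_deriv: "\<And>t. t \<in> {T..T+\<delta>} \<Longrightarrow> (Y has_vector_derivative F t (Y t)) (at t within {T..T+\<delta>})"
    and Y_near: "\<And>t. t \<in> {T..T+\<delta>} \<Longrightarrow> norm (Y t - (L1, L2)) \<le> \<delta> * M"
    using picard_lindelof_global[OF \<delta>(1) F_cont F_bound F_lip K \<delta>K] by auto
  have Y_B: "Y t \<in> ?B" if "t \<in> {T..T+\<delta>}" for t
  proof -
    have "norm (Y t - (L1, L2)) \<le> 1" using Y_near[OF that] \<delta>M by simp
    then show ?thesis unfolding mem_unit_box
      using abs_fst_le_norm[of "Y t - (L1, L2)"] abs_snd_le_norm[of "Y t - (L1, L2)"] by simp
  qed
  have F_Y: "F t (Y t) = (snd (Y t), ode_rhs a b c t (fst (Y t)) (snd (Y t)))" if "t \<in> {T..T+\<delta>}" for t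
    using cl_id[OF Y_B[OF that]] unfolding F_def ode_field_def by simp
  show ?thesis
  proof (rule that[of \<delta> "\<lambda>t. fst (Y t)" "\<lambda>t. snd (Y t)"])
    fix t assume t: "t \<in> {T..T+\<delta>}"
    show "((\<lambda>t. fst (Y t)) has_real_derivative snd (Y t)) (at t within {T..T+\<delta>})"
      using bounded_linear.has_vector_derivative[OF bounded_linear_fst Y_deriv[OF t]] F_Y[OF t]
      by (simp add: has_real_derivative_iff_has_vector_derivative)
    show "((\<lambda>t. snd (Y t)) has_real_derivative ode_rhs a b c t (fst (Y t)) (snd (Y t)))
        (at t within {T..T+\<delta>})"
      using bounded_linear.has_vector_derivative[OF bounded_linear_snd Y_deriv[OF t]] F_Y[OF t]
      by (simp add: has_real_derivative_iff_has_vector_derivative)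
    show "\<bar>fst (Y t) - L1\<bar> \<le> 1" using Y_B[OF t] by (simp add: mem_unit_box)
  qed (use \<delta> Y0 in auto)
qed

section \<open>One-sided limits and gluing\<close>

lemma mono_bounded_tendsto_at_left:
  fixes g :: "real \<Rightarrow> real"
  assumes "t0 < T" and mono: "\<And>x y. t0 \<le> x \<Longrightarrow> x \<le> y \<Longrightarrow> y < T \<Longrightarrow> g x \<le> g y"
    and bound: "\<And>x. t0 \<le> x \<Longrightarrow> x < T \<Longrightarrow> g x \<le> B"
  obtains L where "(g \<longlongrightarrow> L) (at_left T)"
proof -
  have "(g \<longlongrightarrow> Sup (g ` ({..<T} \<inter> {t0..}))) (at T within ({..<T} \<inter> {t0..}))"
    by (rule Lim_left_bound) (use mono bound in auto)
  moreover have "at T within ({..<T} \<inter> {t0..}) = at_left T"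
    by (rule at_within_nhd[of _ "{t0<..}"]) (use assms(1) in auto)
  ultimately show ?thesis using that by auto
qed

lemma left_limit_linear_approx:
  fixes f f' :: "real \<Rightarrow> real"
  assumes deriv: "\<And>x. a < x \<Longrightarrow> x < T \<Longrightarrow> (f has_real_derivative f' x) (at x)"
    and f_lim: "(f \<longlongrightarrow> fT) (at_left T)"
    and close: "\<And>x. a < x \<Longrightarrow> x < T \<Longrightarrow> \<bar>f' x - L\<bar> \<le> \<epsilon>"
    and y: "a < y" "y < T"
  shows "\<bar>fT - f y - L * (T - y)\<bar> \<le> \<epsilon> * (T - y)"
proof -
  have "eventually (\<lambda>w. \<bar>f w - f y - L * (w - y)\<bar> \<le> \<epsilon> * (w - y)) (at_left T)"
    using eventually_at_left_real[OF y(2)]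
  proof (rule eventually_mono)
    fix w assume w: "w \<in> {y<..<T}"
    obtain z where z: "y < z" "z < w" "f w - f y = (w - y) * f' z"
      using MVT2[of y w f f'] w y deriv by auto
    have "f w - f y - L * (w - y) = (w - y) * (f' z - L)" using z(3) by (simp add: algebra_simps)
    then have "\<bar>f w - f y - L * (w - y)\<bar> = (w - y) * \<bar>f' z - L\<bar>" using w by (simp add: abs_mult)
    also have "\<dots> \<le> (w - y) * \<epsilon>" using close[of z] z w y by (intro mult_left_mono) auto
    finally show "\<bar>f w - f y - L * (w - y)\<bar> \<le> \<epsilon> * (w - y)" by (simp add: mult.commute)
  qed
  moreover have "((\<lambda>w. \<bar>f w - f y - L * (w - y)\<bar>) \<longlongrightarrow> \<bar>fT - f y - L * (T - y)\<bar>) (at_left T)"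
    by (intro tendsto_intros f_lim)
  moreover have "((\<lambda>w. \<epsilon> * (w - y)) \<longlongrightarrow> \<epsilon> * (T - y)) (at_left T)"
    by (intro tendsto_intros)
  ultimately show ?thesis by (intro tendsto_le[of "at_left T"]) simp_all
qed

lemma has_real_derivative_left_endpoint:
  fixes f f' H :: "real \<Rightarrow> real"
  assumes "a < T"
    and deriv: "\<And>x. a < x \<Longrightarrow> x < T \<Longrightarrow> (f has_real_derivative f' x) (at x)"
    and f_lim: "(f \<longlongrightarrow> fT) (at_left T)" and f'_lim: "(f' \<longlongrightarrow> L) (at_left T)"
    and H: "H T = fT" "\<And>x. x \<in> {a..<T} \<Longrightarrow> H x = f x"
  shows "(H has_real_derivative L) (at T within {a..T})"
  unfolding has_field_derivative_iff
proof (rule tendstoI)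
  fix \<epsilon> :: real assume "\<epsilon> > 0"
  then have "eventually (\<lambda>x. dist (f' x) L < \<epsilon>/2) (at_left T)" by (intro tendstoD[OF f'_lim]) simp
  then obtain b where b: "b < T" "\<And>x. b < x \<Longrightarrow> x < T \<Longrightarrow> dist (f' x) L < \<epsilon>/2"
    unfolding eventually_at_left_field by blast
  have close: "\<bar>f' x - L\<bar> \<le> \<epsilon>/2" if "max a b < x" "x < T" for x
    using b(2)[of x] that by (simp add: dist_real_def)
  show "eventually (\<lambda>y. dist ((H y - H T) / (y - T)) L < \<epsilon>) (at T within {a..T})"
    unfolding eventually_at
  proof (intro exI[of _ "T - max a b"] conjI ballI impI)
    show "T - max a b > 0" using assms(1) b by simp
    fix y assume "y \<in> {a..T}" and "y \<noteq> T \<and> dist y T < T - max a b"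
    then have y: "max a b < y" "y < T" by (auto simp: dist_real_def)
    have approx: "\<bar>fT - f y - L * (T - y)\<bar> \<le> \<epsilon>/2 * (T - y)"
      by (rule left_limit_linear_approx[OF _ f_lim close y]) (use deriv in auto)
    have "(H y - H T) / (y - T) - L = (fT - f y - L * (T - y)) / (T - y)"
      using H y by (simp add: field_simps)
    then have "\<bar>(H y - H T) / (y - T) - L\<bar> = \<bar>fT - f y - L * (T - y)\<bar> / (T - y)" using y by simp
    also have "\<dots> \<le> \<epsilon>/2" using approx y by (simp add: divide_le_eq)
    finally show "dist ((H y - H T) / (y - T)) L < \<epsilon>" using \<open>\<epsilon> > 0\<close> by (simp add: dist_real_def)
  qed
qed

lemma has_real_derivative_glue:
  fixes p q p' q' :: "real \<Rightarrow> real"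
  assumes "t0 < T" "0 < \<delta>"
    and dp: "\<And>t. t \<in> {t0..<T} \<Longrightarrow> (p has_real_derivative p' t) (at t within {t0..<T})"
    and dq: "\<And>t. t \<in> {T..T+\<delta>} \<Longrightarrow> (q has_real_derivative q' t) (at t within {T..T+\<delta>})"
    and p_lim: "(p \<longlongrightarrow> q T) (at_left T)" and p'_lim: "(p' \<longlongrightarrow> q' T) (at_left T)"
    and t: "t \<in> {t0..<T+\<delta>}"
  shows "((\<lambda>t. if t < T then p t else q t) has_real_derivative (if t < T then p' t else q' t))
           (at t within {t0..<T+\<delta>})"
proof -
  let ?h = "\<lambda>t. if t < T then p t else q t"
  consider (left) "t < T" | (right) "T < t" | (joint) "t = T" by linarith
  then show ?thesis
  proof cases
    case left
    have tT: "t \<in> {t0..<T}" using left t by simp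
    have "at t within {t0..<T+\<delta>} = at t within {t0..<T}"
      by (rule at_within_nhd[of _ "{..<T}"]) (use left assms(2) in auto)
    moreover have "(?h has_real_derivative p' t) (at t within {t0..<T})"
      by (rule has_field_derivative_transform_within[OF dp[OF tT] zero_less_one tT]) auto
    ultimately show ?thesis using left by simp
  next
    case right
    have tT: "t \<in> {T..T+\<delta>}" using right t by simp
    have "at t within {t0..<T+\<delta>} = at t within {T..T+\<delta>}"
      by (rule at_within_nhd[of _ "{T<..<T+\<delta>}"]) (use right t assms(1) in auto)
    moreover have "(?h has_real_derivative q' t) (at t within {T..T+\<delta>})"
      by (rule has_field_derivative_transform_within[OF dq[OF tT] zero_less_one tT]) auto
    ultimately show ?thesis using right by simp
  next
    case joint
    have T: "T \<in> {T..T+\<delta>}" using assms(2) by simp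
    have "(?h has_real_derivative q' T) (at T within {t0..T})"
    proof (rule has_real_derivative_left_endpoint[OF assms(1) _ p_lim p'_lim])
      fix x assume "t0 < x" "x < T"
      then show "(p has_real_derivative p' x) (at x)"
        using dp[of x] at_within_interior[of x "{t0..<T}"] by auto
    qed auto
    moreover have "(?h has_real_derivative q' T) (at T within {T..T+\<delta>})"
      by (rule has_field_derivative_transform_within[OF dq[OF T] zero_less_one T]) auto
    then have "(?h has_real_derivative q' T) (at T within {T..<T+\<delta>})"
      by (rule DERIV_subset) auto
    ultimately have "(?h has_real_derivative q' T) (at T within {t0..T} \<union> {T..<T+\<delta>})"
      unfolding has_field_derivative_iff by (simp add: Lim_within_Un)
    moreover have "{t0..T} \<union> {T..<T+\<delta>} = {t0..<T+\<delta>}" using assms(1,2) by auto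
    ultimately show ?thesis using joint by simp
  qed
qed

lemma continuous_on_glue:
  fixes p q :: "real \<Rightarrow> real"
  assumes "t0 < T" "0 < \<delta>"
    and p: "continuous_on {t0..<T} p" and q: "continuous_on {T..T+\<delta>} q"
    and p_lim: "(p \<longlongrightarrow> q T) (at_left T)"
  shows "continuous_on {t0..<T+\<delta>} (\<lambda>t. if t < T then p t else q t)"
  unfolding continuous_on_eq_continuous_within
proof
  let ?h = "\<lambda>t. if t < T then p t else q t"
  fix t assume t: "t \<in> {t0..<T+\<delta>}"
  consider (left) "t < T" | (right) "T < t" | (joint) "t = T" by linarith
  then show "continuous (at t within {t0..<T+\<delta>}) ?h"
  proof cases
    case left
    have "at t within {t0..<T+\<delta>} = at t within {t0..<T}"
      by (rule at_within_nhd[of _ "{..<T}"]) (use left assms(2) in auto)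
    moreover have "(p \<longlongrightarrow> p t) (at t within {t0..<T})"
      using p t left unfolding continuous_on_def by auto
    then have "(?h \<longlongrightarrow> p t) (at t within {t0..<T})"
      by (rule Lim_transform_within[OF _ zero_less_one]) auto
    ultimately show ?thesis unfolding continuous_within using left by simp
  next
    case right
    have "at t within {t0..<T+\<delta>} = at t within {T..T+\<delta>}"
      by (rule at_within_nhd[of _ "{T<..<T+\<delta>}"]) (use right t assms(1) in auto)
    moreover have "(q \<longlongrightarrow> q t) (at t within {T..T+\<delta>})"
      using q t right unfolding continuous_on_def by auto
    then have "(?h \<longlongrightarrow> q t) (at t within {T..T+\<delta>})"
      by (rule Lim_transform_within[OF _ zero_less_one]) auto
    ultimately show ?thesis unfolding continuous_within using right by simp
  next
    case joint
    have "(p \<longlongrightarrow> q T) (at T within {t0..<T})"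
      by (rule tendsto_within_subset[OF p_lim]) auto
    then have "(?h \<longlongrightarrow> q T) (at T within {t0..<T})"
      by (rule Lim_transform_within[OF _ zero_less_one]) auto
    moreover have "(q \<longlongrightarrow> q T) (at T within {T..T+\<delta>})"
      using q assms(2) unfolding continuous_on_def by simp
    then have "(q \<longlongrightarrow> q T) (at T within {T..<T+\<delta>})"
      by (rule tendsto_within_subset) auto
    then have "(?h \<longlongrightarrow> q T) (at T within {T..<T+\<delta>})"
      by (rule Lim_transform_within[OF _ zero_less_one]) auto
    ultimately have "(?h \<longlongrightarrow> q T) (at T within {t0..<T} \<union> {T..<T+\<delta>})"
      by (simp add: Lim_within_Un)
    moreover have "{t0..<T} \<union> {T..<T+\<delta>} = {t0..<T+\<delta>}" using assms(1,2) by auto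
    ultimately show ?thesis unfolding continuous_within using joint by simp
  qed
qed



locale ode_solution =
  fixes a b c t0 \<beta> \<beta>0 :: real and tm :: ereal and f f1 f2 :: "real \<Rightarrow> real"
  assumes ha: "a > 1" and hb: "b > 0" and hc1: "1 < c" and hc2: "c < 3/2"
    and ht0: "t0 > 0" and h\<beta>: "\<beta> > 0" and h\<beta>0: "\<beta>0 > 0"
    and htm: "ereal t0 < tm"
    and hf1: "\<forall>t\<in>ivl t0 tm. (f has_real_derivative f1 t) (at t within ivl t0 tm)"
    and hf2: "\<forall>t\<in>ivl t0 tm. (f1 has_real_derivative f2 t) (at t within ivl t0 tm)"
    and hf2c: "continuous_on (ivl t0 tm) f2"
    and hode: "\<forall>t\<in>ivl t0 tm. f2 t + a / t * f1 t - b / t\<^sup>2 * f t * (1 + f t)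
                                - c * (f1 t)\<^sup>2 / (1 + f t) = 0"
    and hinit: "f t0 = \<beta>" "f1 t0 = \<beta>0"
begin

abbreviation "I \<equiv> ivl t0 tm"

lemma t0_in_I: "t0 \<in> I"
  using htm by (simp add: ivl_def)

lemma pos_of_in_I: "t \<in> I \<Longrightarrow> t > 0"
  using ht0 by (auto simp: ivl_def)

lemma f_deriv: "t \<in> I \<Longrightarrow> (f has_real_derivative f1 t) (at t within I)"
  using hf1 by blast

lemma f1_deriv: "t \<in> I \<Longrightarrow> (f1 has_real_derivative f2 t) (at t within I)"
  using hf2 by blast

lemma f_continuous: "continuous_on I f"
  using DERIV_continuous_on f_deriv by blast

lemma f1_continuous: "continuous_on I f1"
  using DERIV_continuous_on f1_deriv by blast

lemma f2_eq: "t \<in> I \<Longrightarrow> f2 t = ode_rhs a b c t (f t) (f1 t)"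
  using hode by (auto simp: ode_rhs_def algebra_simps)

lemma one_plus_f_deriv: "t \<in> I \<Longrightarrow> ((\<lambda>t. 1 + f t) has_real_derivative f1 t) (at t within I)"
  using DERIV_add[OF DERIV_const f_deriv] by simp

text \<open>At the first zero \<open>s\<close> of \<open>f1\<close> we would have \<open>f s > 0\<close>, hence \<open>f2 s > 0\<close> by the
  equation, contradicting \<open>f1 > 0\<close> just before \<open>s\<close>.\<close>
lemma f1_pos:
  assumes t1: "t1 \<in> I" shows "f1 t1 > 0"
proof (rule ccontr)
  assume neg: "\<not> f1 t1 > 0"
  define Z where "Z = {t0..t1} \<inter> f1 -` {..0}"
  have sub: "{t0..t1} \<subseteq> I" using atLeastAtMost_subset_ivl[OF t0_in_I t1] .
  have "closed Z" unfolding Z_def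
    by (rule continuous_closed_preimage[OF continuous_on_subset[OF f1_continuous sub]]) auto
  moreover have "Z \<noteq> {}" using neg t1 unfolding Z_def by (auto simp: ivl_def)
  moreover have bdd: "bdd_below Z" unfolding Z_def by (rule bdd_belowI[of _ t0]) auto
  ultimately have "Inf Z \<in> Z" using closed_contains_Inf by blast
  define s where "s = Inf Z"
  have sI: "s \<in> I" and fs: "f1 s \<le> 0" using \<open>Inf Z \<in> Z\<close> sub unfolding s_def Z_def by auto
  have "s \<noteq> t0" using fs hinit h\<beta>0 by auto
  then have st0: "s > t0" using \<open>Inf Z \<in> Z\<close> unfolding s_def Z_def by auto
  have below: "f1 x > 0" if "t0 \<le> x" "x < s" for x
  proof (rule ccontr)
    assume "\<not> f1 x > 0"
    then have "x \<in> Z" using that \<open>Inf Z \<in> Z\<close> unfolding Z_def s_def by auto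
    then have "s \<le> x" unfolding s_def using bdd by (rule cInf_lower)
    then show False using that by simp
  qed
  have "f t0 \<le> f s"
    by (rule ivl_deriv_nonneg_imp_le[OF f_deriv t0_in_I sI]) (use st0 in \<open>auto intro!: less_imp_le below\<close>)
  then have fpos: "f s > 0" using hinit h\<beta> by simp
  have "f2 s > 0"
  proof -
    have "- a / s * f1 s \<ge> 0" using fs ha st0 ht0 by (simp add: divide_nonpos_pos mult_nonneg_nonpos)
    moreover have "b / s\<^sup>2 * f s * (1 + f s) > 0" using hb fpos st0 ht0 by simp
    moreover have "c * (f1 s)\<^sup>2 / (1 + f s) \<ge> 0" using hc1 fpos by simp
    ultimately show ?thesis using f2_eq[OF sI] unfolding ode_rhs_def by linarith
  qed
  moreover have "(f1 has_real_derivative f2 s) (at s)"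
    using has_real_derivative_at_ivl f1_deriv sI st0 by blast
  ultimately obtain d where d: "d > 0" "\<And>h. 0 < h \<Longrightarrow> h < d \<Longrightarrow> f1 (s - h) < f1 s"
    using DERIV_pos_inc_left by blast
  define h where "h = min (d/2) ((s - t0)/2)"
  have "h > 0" "h < d" using d st0 by (auto simp: h_def)
  moreover have "h \<le> (s - t0)/2" unfolding h_def by (rule min.cobounded2)
  ultimately show False using d(2)[of h] below[of "s - h"] fs by auto
qed

lemma f_mono:
  assumes "x \<in> I" "y \<in> I" "x \<le> y" shows "f x \<le> f y"
proof (rule ivl_deriv_nonneg_imp_le[OF f_deriv assms])
  fix t assume "x < t" "t < y"
  then have "t \<in> I" using atLeastAtMost_subset_ivl[OF assms(1,2)] by auto
  then show "f1 t \<ge> 0" using f1_pos less_imp_le by blast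
qed

lemma f_ge_beta: "t \<in> I \<Longrightarrow> f t \<ge> \<beta>"
  using f_mono[OF t0_in_I] hinit by (auto simp: ivl_def)

lemma f_pos: "t \<in> I \<Longrightarrow> f t > 0"
  using f_ge_beta h\<beta> by (meson less_le_trans)

lemma one_plus_f_pos: "t \<in> I \<Longrightarrow> 1 + f t > 0"
  using f_pos by (simp add: add_pos_pos)

section \<open>An energy estimate\<close>

definition energy :: "real \<Rightarrow> real" where
  "energy t = t powr (2*a) * (f1 t)\<^sup>2 / (1 + f t) powr (2*c)"

lemma has_real_derivative_energy:
  assumes t: "t \<in> I"
  shows "(energy has_real_derivative 2*b * t powr (2*a-2) * f t * (1 + f t) powr (1-2*c) * f1 t)
           (at t within I)"
proof -
  have u: "1 + f t > 0" using f_pos[OF t] by simp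
  have tp: "t > 0" using pos_of_in_I[OF t] .
  define P Q where "P = t powr (2*a)" and "Q = (1 + f t) powr (2*c)"
  have PQ: "P > 0" "Q > 0" unfolding P_def Q_def using tp u by auto
  have deriv: "(energy has_real_derivative
      ((2*a * (P/t) * (f1 t)\<^sup>2 + 2 * f1 t * f2 t * P) * Q - P * (f1 t)\<^sup>2 * (2*c * (Q/(1 + f t)) * f1 t))
        / (Q * Q)) (at t within I)"
    unfolding energy_def[abs_def] P_def Q_def
    using tp u
    by (auto intro!: derivative_eq_intros f_deriv f1_deriv t DERIV_chain2[OF has_real_derivative_powr]
             simp: powr_diff power2_eq_square)
  have e: "t powr (2*a-2) = P / t\<^sup>2" "(1 + f t) powr (1-2*c) = (1 + f t) / Q"
    unfolding P_def Q_def using tp u by (simp_all add: powr_diff)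
  have alg: "((2*a * (P/t) * y\<^sup>2 + 2 * y * z * P) * Q - P * y\<^sup>2 * (2*c * (Q/v) * y)) / (Q * Q)
      = 2 * P * y * (a * y / t + z - c * y\<^sup>2 / v) / Q" if "v > 0" for v y z
    using that tp PQ by (simp add: field_simps power2_eq_square)
  have "a * f1 t / t + f2 t - c * (f1 t)\<^sup>2 / (1 + f t) = b / t\<^sup>2 * f t * (1 + f t)"
    using f2_eq[OF t] by (simp add: ode_rhs_def)
  then have "((2*a * (P/t) * (f1 t)\<^sup>2 + 2 * f1 t * f2 t * P) * Q - P * (f1 t)\<^sup>2 * (2*c * (Q/(1 + f t)) * f1 t))
        / (Q * Q) = 2 * P * f1 t * (b / t\<^sup>2 * f t * (1 + f t)) / Q"
    unfolding alg[OF u] by simp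
  also have "\<dots> = 2*b * t powr (2*a-2) * f t * (1 + f t) powr (1-2*c) * f1 t"
    unfolding e by (simp add: field_simps)
  finally show ?thesis using deriv by simp
qed

text \<open>An antiderivative of \<open>y (1 + y) powr (1 - 2c)\<close>, so that \<open>t \<mapsto> potential (f t)\<close> has the
  derivative of \<open>energy\<close> up to the factor \<open>2 b t powr (2a - 2)\<close>.\<close>
definition potential :: "real \<Rightarrow> real" where
  "potential y = (1 + y) powr (3 - 2*c) / (3 - 2*c) + (1 + y) powr (2 - 2*c) / (2*c - 2)"

lemma has_real_derivative_potential:
  assumes t: "t \<in> I"
  shows "((\<lambda>x. potential (f x)) has_real_derivative f t * (1 + f t) powr (1 - 2*c) * f1 t) (at t within I)"
proof -
  have u: "1 + f t > 0" using f_pos[OF t] by simp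
  have c: "3 - 2*c \<noteq> 0" "2*c - 2 \<noteq> 0" using hc1 hc2 by auto
  have "((\<lambda>x. potential (f x)) has_real_derivative
      (3 - 2*c) * (1 + f t) powr (3 - 2*c - 1) * f1 t / (3 - 2*c)
      + (2 - 2*c) * (1 + f t) powr (2 - 2*c - 1) * f1 t / (2*c - 2)) (at t within I)"
    unfolding potential_def
    by (intro DERIV_add DERIV_cdivide
        DERIV_chain2[where g="\<lambda>x. 1 + f x", OF has_real_derivative_powr[OF u] one_plus_f_deriv[OF t]])
  moreover have "(1 + f t) powr (3 - 2*c - 1) = (1 + f t) powr (1 + (1 - 2*c))"
    by (simp add: algebra_simps)
  then have "(1 + f t) powr (3 - 2*c - 1) = (1 + f t) * (1 + f t) powr (1 - 2*c)"
    using u by (simp only: powr_add powr_one)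
  moreover have "(1 + f t) powr (2 - 2*c - 1) = (1 + f t) powr (1 - 2*c)"
    by (simp add: algebra_simps)
  moreover have "(3 - 2*c) * X / (3 - 2*c) = X" for X using c by simp
  moreover have "(2 - 2*c) * X / (2*c - 2) = - X" for X
  proof -
    have "(2 - 2*c) * X = - ((2*c - 2) * X)" by (simp add: algebra_simps)
    then show ?thesis using c by simp
  qed
  ultimately show ?thesis by (simp only: mult.assoc) (simp add: algebra_simps)
qed

lemma energy_increment_ge:
  assumes s: "s \<in> I" and t: "t \<in> I" and "s \<le> t"
  shows "energy t - energy s \<ge> 2*b * s powr (2*a-2) * (potential (f t) - potential (f s))"
proof -
  define \<Phi> where "\<Phi> x = energy x - 2*b * s powr (2*a-2) * potential (f x)" for x
  define \<Phi>' where "\<Phi>' x = (2*b * x powr (2*a-2) - 2*b * s powr (2*a-2)) * (f x * (1 + f x) powr (1-2*c) * f1 x)"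
    for x
  have "(\<Phi> has_real_derivative \<Phi>' x) (at x within I)" if "x \<in> I" for x
    using DERIV_diff[OF has_real_derivative_energy[OF that] DERIV_cmult[where c="2*b * s powr (2*a-2)", OF has_real_derivative_potential[OF that]]]
    unfolding \<Phi>_def[abs_def] \<Phi>'_def by (simp add: algebra_simps)
  then have "\<Phi> s \<le> \<Phi> t"
  proof (rule ivl_deriv_nonneg_imp_le[OF _ s t \<open>s \<le> t\<close>])
    fix x assume x: "s < x" "x < t"
    then have xI: "x \<in> I" using atLeastAtMost_subset_ivl[OF s t] by auto
    have "s powr (2*a-2) \<le> x powr (2*a-2)"
      using x pos_of_in_I[OF s] ha by (intro powr_mono2) auto
    moreover have "0 \<le> f x * (1 + f x) powr (1-2*c) * f1 x"
      using f_pos[OF xI] f1_pos[OF xI] by simp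
    ultimately show "0 \<le> \<Phi>' x" unfolding \<Phi>'_def using hb by simp
  qed
  then show ?thesis unfolding \<Phi>_def by (simp add: algebra_simps)
qed

definition potential_const :: real where
  "potential_const = 1 / (3 - 2*c) + 1 / (2*c - 2)"

lemma potential_lower: "y \<ge> 0 \<Longrightarrow> potential y \<ge> (1 + y) powr (3 - 2*c) / (3 - 2*c)"
  unfolding potential_def using hc1 by simp

lemma potential_upper:
  assumes "y \<ge> 0" shows "potential y \<le> potential_const * (1 + y) powr (3 - 2*c)"
proof -
  have "(1 + y) powr (2 - 2*c) \<le> (1 + y) powr (3 - 2*c)" using assms by (intro powr_mono) auto
  then have "(1 + y) powr (2 - 2*c) / (2*c - 2) \<le> (1 + y) powr (3 - 2*c) / (2*c - 2)"
    using hc1 by (intro divide_right_mono) auto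
  then show ?thesis unfolding potential_def potential_const_def by (simp add: algebra_simps add_divide_distrib)
qed

lemma deriv_sq_lower_bound:
  assumes t: "t \<in> I" and l: "0 < l" "l < 1" and \<rho>: "0 < \<rho>"
    and ratio: "1 + f (max t0 (l*t)) \<le> \<rho> * (1 + f t)"
    and B: "1 / (3 - 2*c) - potential_const * \<rho> powr (3 - 2*c) \<ge> 0"
  shows "t\<^sup>2 * (f1 t)\<^sup>2 \<ge> 2*b * l powr (2*a-2) * (1 / (3 - 2*c) - potential_const * \<rho> powr (3 - 2*c)) * (1 + f t)^3"
proof -
  define s where "s = max t0 (l*t)"
  define B where "B = 1 / (3 - 2*c) - potential_const * \<rho> powr (3 - 2*c)"
  have tp: "t > 0" using pos_of_in_I[OF t] .
  have st: "s \<le> t" unfolding s_def using t l tp by (auto simp: ivl_def)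
  have sI: "s \<in> I" using atLeastAtMost_subset_ivl[OF t0_in_I t] st unfolding s_def by auto
  have ft: "f t > 0" and fs: "f s > 0" using f_pos t sI by auto
  have "(1 + f s) powr (3 - 2*c) \<le> (\<rho> * (1 + f t)) powr (3 - 2*c)"
    using ratio fs hc2 unfolding s_def by (intro powr_mono2) auto
  also have "\<dots> = \<rho> powr (3 - 2*c) * (1 + f t) powr (3 - 2*c)" using \<rho> ft by (simp add: powr_mult)
  finally have "(1 + f s) powr (3 - 2*c) \<le> \<rho> powr (3 - 2*c) * (1 + f t) powr (3 - 2*c)" .
  moreover have "potential_const \<ge> 0" unfolding potential_const_def using hc1 hc2 by simp
  ultimately have "potential_const * (1 + f s) powr (3 - 2*c)
      \<le> potential_const * (\<rho> powr (3 - 2*c) * (1 + f t) powr (3 - 2*c))"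
    by (intro mult_left_mono)
  then have "potential (f s) \<le> potential_const * \<rho> powr (3 - 2*c) * (1 + f t) powr (3 - 2*c)"
    using potential_upper[of "f s"] fs by (simp add: mult.assoc)
  then have pot: "potential (f t) - potential (f s) \<ge> B * (1 + f t) powr (3 - 2*c)"
    using potential_lower[of "f t"] ft unfolding B_def by (simp add: algebra_simps)
  have spow: "s powr (2*a-2) \<ge> l powr (2*a-2) * t powr (2*a-2)"
  proof -
    have "(l*t) powr (2*a-2) \<le> s powr (2*a-2)" unfolding s_def using l tp ha by (intro powr_mono2) auto
    then show ?thesis using l tp by (simp add: powr_mult)
  qed
  have "2*b * s powr (2*a-2) * (B * (1 + f t) powr (3 - 2*c))
      \<le> 2*b * s powr (2*a-2) * (potential (f t) - potential (f s))"
    using pot hb by (intro mult_left_mono) auto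
  also have "\<dots> \<le> energy t - energy s" by (rule energy_increment_ge[OF sI t st])
  also have "\<dots> \<le> energy t" unfolding energy_def by simp
  finally have "energy t \<ge> 2*b * s powr (2*a-2) * (B * (1 + f t) powr (3 - 2*c))" .
  moreover have "2*b * s powr (2*a-2) * (B * (1 + f t) powr (3 - 2*c))
      \<ge> 2*b * (l powr (2*a-2) * t powr (2*a-2)) * (B * (1 + f t) powr (3 - 2*c))"
    using spow hb B unfolding B_def by (intro mult_right_mono mult_left_mono mult_nonneg_nonneg) auto
  ultimately have Et: "energy t \<ge> 2*b * l powr (2*a-2) * B * t powr (2*a-2) * (1 + f t) powr (3 - 2*c)"
    by (simp add: algebra_simps)
  have eq: "t\<^sup>2 * (f1 t)\<^sup>2 = energy t * (1 + f t) powr (2*c) / t powr (2*a-2)"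
    unfolding energy_def using tp ft by (simp add: powr_diff field_simps)
  have cube: "(1 + f t) powr (3 - 2*c) * (1 + f t) powr (2*c) = (1 + f t) ^ 3"
    using ft by (simp add: powr_add[symmetric] powr_realpow)
  have "2*b * l powr (2*a-2) * B * (1 + f t) ^ 3
      = 2*b * l powr (2*a-2) * B * t powr (2*a-2) * (1 + f t) powr (3 - 2*c) * (1 + f t) powr (2*c) / t powr (2*a-2)"
    using tp cube by (simp add: field_simps)
  also have "\<dots> \<le> energy t * (1 + f t) powr (2*c) / t powr (2*a-2)"
    using Et tp by (intro divide_right_mono mult_right_mono) auto
  finally show ?thesis unfolding eq B_def .
qed

section \<open>Growth of \<open>f\<close>\<close>

definition log_rate :: "real \<Rightarrow> real" where
  "log_rate t = t * f1 t / (1 + f t)"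

lemma log_rate_lower:
  assumes t1: "t1 \<in> I" and t: "t \<in> I" and "t1 \<le> t"
  shows "t powr (a-1) * log_rate t \<ge> b * f t1 / (a-1) * (t powr (a-1) - t1 powr (a-1))"
proof -
  define C where "C = b * f t1 / (a-1)"
  define W where "W x = x powr a * (f1 x / (1 + f x)) - C * x powr (a-1)" for x
  define W' where "W' x = x powr (a-2) * (b * f x + (c-1) * (x * f1 x / (1 + f x))\<^sup>2 - b * f t1)" for x
  have "(W has_real_derivative W' x) (at x within I)" if x: "x \<in> I" for x
  proof -
    have u: "1 + f x > 0" using f_pos[OF x] by simp
    have xp: "x > 0" using pos_of_in_I[OF x] .
    have D: "(W has_real_derivative
        a * x powr (a - 1) * (f1 x / (1 + f x))
        + (f2 x * (1 + f x) - f1 x * f1 x) / ((1 + f x) * (1 + f x)) * x powr a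
        - C * ((a-1) * x powr (a - 1 - 1))) (at x within I)"
      unfolding W_def[abs_def]
      by (intro DERIV_diff DERIV_mult DERIV_cmult DERIV_divide one_plus_f_deriv f1_deriv x
          has_field_derivative_at_within[OF has_real_derivative_powr[OF xp]]) (use u in auto)
    have e: "x powr (a - 1) = x powr a / x" "x powr (a - 1 - 1) = x powr a / x\<^sup>2"
      "x powr (a - 2) = x powr a / x\<^sup>2"
      using xp by (simp_all add: powr_diff power2_eq_square)
    have alg: "a * (P / x) * (y / v) + ((z * v - y * y) / (v * v)) * P - K * ((a - 1) * (P / x\<^sup>2))
      = (P / x\<^sup>2) * (b * (v - 1) + (c - 1) * (x * y / v)\<^sup>2 - K * (a - 1))"
      if "v > 0" "a * y / x + z - c * y\<^sup>2 / v = b / x\<^sup>2 * (v - 1) * v" for v y z P K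
    proof -
      have zeq: "z = b / x\<^sup>2 * (v - 1) * v - a * y / x + c * y\<^sup>2 / v" using that(2) by simp
      show ?thesis unfolding zeq using that(1) xp by (simp add: field_simps power2_eq_square)
    qed
    have "a * f1 x / x + f2 x - c * (f1 x)\<^sup>2 / (1 + f x) = b / x\<^sup>2 * ((1 + f x) - 1) * (1 + f x)"
      using f2_eq[OF x] by (simp add: ode_rhs_def)
    from alg[OF u this, of "x powr a" C]
    have "a * (x powr a / x) * (f1 x / (1 + f x))
        + ((f2 x * (1 + f x) - f1 x * f1 x) / ((1 + f x) * (1 + f x))) * x powr a
        - C * ((a - 1) * (x powr a / x\<^sup>2)) = W' x"
      unfolding W'_def e(3) using ha unfolding C_def by simp
    then show ?thesis using D unfolding e by simp
  qed
  then have "W t1 \<le> W t"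
  proof (rule ivl_deriv_nonneg_imp_le[OF _ t1 t \<open>t1 \<le> t\<close>])
    fix x assume x: "t1 < x" "x < t"
    then have xI: "x \<in> I" using atLeastAtMost_subset_ivl[OF t1 t] by auto
    have "b * f t1 \<le> b * f x" using f_mono[OF t1 xI] x hb by simp
    moreover have "0 \<le> (c-1) * (x * f1 x / (1 + f x))\<^sup>2" using hc1 by simp
    ultimately show "0 \<le> W' x" unfolding W'_def by (intro mult_nonneg_nonneg) auto
  qed
  moreover have "W t1 \<ge> - C * t1 powr (a-1)"
    unfolding W_def using f1_pos[OF t1] f_pos[OF t1] pos_of_in_I[OF t1] by simp
  moreover have "t powr a * (f1 t / (1 + f t)) = t powr (a-1) * log_rate t"
    using pos_of_in_I[OF t] unfolding log_rate_def by (simp add: powr_diff field_simps)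
  ultimately show ?thesis unfolding W_def C_def by (simp add: algebra_simps)
qed

lemma ln_growth:
  assumes s: "s \<in> I" and t: "t \<in> I" and "s \<le> t"
    and rate: "\<And>x. s < x \<Longrightarrow> x < t \<Longrightarrow> log_rate x \<ge> m"
  shows "ln (1 + f t) - ln (1 + f s) \<ge> m * (ln t - ln s)"
proof -
  define V where "V x = ln (1 + f x) - m * ln x" for x
  have "(V has_real_derivative f1 x / (1 + f x) - m / x) (at x within I)" if x: "x \<in> I" for x
    using DERIV_diff[OF DERIV_chain2[OF DERIV_ln one_plus_f_deriv[OF x]]
        DERIV_cmult[where c=m, OF has_field_derivative_at_within[OF DERIV_ln]]] f_pos[OF x] pos_of_in_I[OF x]
    unfolding V_def[abs_def] by (simp add: divide_inverse mult.commute)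
  then have "V s \<le> V t"
  proof (rule ivl_deriv_nonneg_imp_le[OF _ s t \<open>s \<le> t\<close>])
    fix x assume x: "s < x" "x < t"
    then have xI: "x \<in> I" using atLeastAtMost_subset_ivl[OF s t] by auto
    have "m \<le> x * f1 x / (1 + f x)" using rate[OF x] unfolding log_rate_def .
    then show "0 \<le> f1 x / (1 + f x) - m / x"
      using pos_of_in_I[OF xI] f_pos[OF xI] by (simp add: field_simps)
  qed
  then show ?thesis unfolding V_def by (simp add: algebra_simps)
qed

lemma ivl_infinity: "tm = \<infinity> \<Longrightarrow> I = {t0..}"
  by (auto simp: ivl_def)

lemma log_rate_ge_infinite:
  assumes "tm = \<infinity>" and t1: "t1 \<in> I" and t: "t \<ge> 2 powr (1/(a-1)) * t1"
  shows "log_rate t \<ge> b * f t1 / (2*(a-1))"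
proof -
  have t1p: "t1 > 0" using pos_of_in_I[OF t1] .
  have "2 powr (1/(a-1)) \<ge> 1" using ha by (intro ge_one_powr_ge_zero) auto
  then have "1 * t1 \<le> 2 powr (1/(a-1)) * t1" using t1p by (intro mult_right_mono) auto
  then have "t1 \<le> t" using t by simp
  then have tI: "t \<in> I" using assms(1) t1 by (simp add: ivl_def)
  have "2 * t1 powr (a-1) = (2 powr (1/(a-1)) * t1) powr (a-1)"
    using ha t1p by (simp add: powr_mult powr_powr)
  also have "\<dots> \<le> t powr (a-1)" using t ha t1p by (intro powr_mono2) auto
  finally have le2: "2 * t1 powr (a-1) \<le> t powr (a-1)" .
  have C0: "b * f t1 / (a-1) \<ge> 0" using hb f_pos[OF t1] ha by simp
  have "t powr (a-1) * (b * f t1 / (2*(a-1))) = b * f t1 / (a-1) * (t powr (a-1) / 2)"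
    by (simp add: field_simps)
  also have "\<dots> \<le> b * f t1 / (a-1) * (t powr (a-1) - t1 powr (a-1))"
    using le2 C0 by (intro mult_left_mono) auto
  also have "\<dots> \<le> t powr (a-1) * log_rate t" by (rule log_rate_lower[OF t1 tI \<open>t1 \<le> t\<close>])
  finally have "t powr (a-1) * (b * f t1 / (2*(a-1))) \<le> t powr (a-1) * log_rate t" .
  moreover have "t powr (a-1) > 0" using pos_of_in_I[OF tI] by simp
  ultimately show ?thesis by (meson mult_le_cancel_left_pos)
qed

lemma f_tendsto_infinity_infinite:
  assumes inf: "tm = \<infinity>" shows "filterlim f at_top (to_tm tm)"
  unfolding filterlim_at_top
proof
  fix M
  define m where "m = b * \<beta> / (2*(a-1))"
  define T0 where "T0 = 2 powr (1/(a-1)) * t0"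
  have m: "m > 0" unfolding m_def using hb h\<beta> ha by simp
  have "T0 \<ge> t0" unfolding T0_def using ht0 ha by (simp add: ge_one_powr_ge_zero)
  then have T0I: "T0 \<in> I" by (simp add: ivl_infinity[OF inf])
  have rate: "log_rate x \<ge> m" if "x \<ge> T0" for x
    using log_rate_ge_infinite[OF inf t0_in_I, of x] that hinit unfolding m_def T0_def by simp
  define T where "T = T0 * exp (max 0 (ln (1 + M)) / m)"
  have "T \<ge> T0" unfolding T_def using \<open>T0 \<ge> t0\<close> ht0 m by simp
  then have TI: "T \<in> I" using T0I by (simp add: ivl_infinity[OF inf])
  have "M \<le> f t" if t: "t \<in> I" "T \<le> t" for t
  proof -
    have "m * (ln t - ln T0) \<le> ln (1 + f t) - ln (1 + f T0)"
      by (rule ln_growth[OF T0I t(1)]) (use t \<open>T \<ge> T0\<close> rate in auto)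
    moreover have "ln (1 + f T0) \<ge> 0" using f_pos[OF T0I] by simp
    moreover have "ln T - ln T0 \<le> ln t - ln T0" using t \<open>T \<ge> T0\<close> \<open>T0 \<ge> t0\<close> ht0 by simp
    moreover have "m * (ln T - ln T0) = max 0 (ln (1 + M))"
      unfolding T_def using \<open>T0 \<ge> t0\<close> ht0 m by (simp add: ln_mult)
    ultimately have "ln (1 + M) \<le> ln (1 + f t)"
      using m mult_left_mono[of "ln T - ln T0" "ln t - ln T0" m] by linarith
    then show "M \<le> f t" using f_pos[OF t(1)] by (cases "1 + M > 0") auto
  qed
  then show "eventually (\<lambda>t. M \<le> f t) (to_tm tm)"
    unfolding eventually_to_tm_iff[OF htm] using TI by blast
qed

lemma log_rate_tendsto_infinity_infinite:
  assumes inf: "tm = \<infinity>" shows "filterlim log_rate at_top (to_tm tm)"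
  unfolding filterlim_at_top
proof
  fix P
  have "eventually (\<lambda>t. 2*(a-1)*P/b \<le> f t) (to_tm tm)"
    using f_tendsto_infinity_infinite[OF inf] unfolding filterlim_at_top by blast
  then obtain T1 where T1: "T1 \<in> I" "\<And>t. t \<in> I \<Longrightarrow> T1 \<le> t \<Longrightarrow> 2*(a-1)*P/b \<le> f t"
    unfolding eventually_to_tm_iff[OF htm] by blast
  have "P \<le> b * f T1 / (2*(a-1))" using T1 hb ha by (simp add: field_simps)
  then have "P \<le> log_rate t" if "t \<ge> 2 powr (1/(a-1)) * T1" for t
    using log_rate_ge_infinite[OF inf T1(1) that] by simp
  then have "eventually (\<lambda>t. P \<le> log_rate t) at_top" by (auto simp: eventually_at_top_linorder)
  then show "eventually (\<lambda>t. P \<le> log_rate t) (to_tm tm)" using inf by (simp add: to_tm_def)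
qed

lemma growth_ratio_infinite:
  assumes inf: "tm = \<infinity>" and l: "0 < l" "l < 1" and \<rho>: "0 < \<rho>"
  shows "eventually (\<lambda>t. 1 + f (max t0 (l*t)) \<le> \<rho> * (1 + f t)) (to_tm tm)"
proof -
  define P where "P = ln (1/\<rho>) / ln (1/l)"
  have "ln (1/l) > 0" using l by simp
  have "eventually (\<lambda>t. P \<le> log_rate t) (to_tm tm)"
    using log_rate_tendsto_infinity_infinite[OF inf] unfolding filterlim_at_top by blast
  then obtain T1 where T1: "T1 \<in> I" "\<And>t. t \<in> I \<Longrightarrow> T1 \<le> t \<Longrightarrow> P \<le> log_rate t"
    unfolding eventually_to_tm_iff[OF htm] by blast
  have "1 + f (max t0 (l*t)) \<le> \<rho> * (1 + f t)" if t: "t \<ge> max T1 t0 / l" for t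
  proof -
    have lt: "l * t \<ge> max T1 t0" using t l by (simp add: field_simps)
    then have "0 < l * t" using ht0 by linarith
    then have "0 < t" using l zero_less_mult_pos by blast
    then have st: "l * t \<le> t" using l by (intro mult_left_le_one_le) auto
    have sI: "l * t \<in> I" and tI: "t \<in> I"
      using lt st by (auto simp: ivl_infinity[OF inf])
    have "P * (ln t - ln (l*t)) \<le> ln (1 + f t) - ln (1 + f (l*t))"
    proof (rule ln_growth[OF sI tI st])
      fix x assume "l * t < x" "x < t"
      then show "P \<le> log_rate x" using lt by (intro T1(2)) (auto simp: ivl_infinity[OF inf])
    qed
    moreover have "P * (ln t - ln (l*t)) = ln (1/\<rho>)"
      unfolding P_def using l st lt ht0 \<open>ln (1/l) > 0\<close> by (simp add: ln_mult ln_div)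
    ultimately have "ln (1 + f (l*t)) \<le> ln (\<rho> * (1 + f t))"
      using \<rho> f_pos[OF tI] by (simp add: ln_mult ln_div)
    then have "1 + f (l*t) \<le> \<rho> * (1 + f t)" using \<rho> f_pos[OF tI] f_pos[OF sI] by simp
    then show ?thesis using lt by (simp add: max_absorb2)
  qed
  then have "eventually (\<lambda>t. 1 + f (max t0 (l*t)) \<le> \<rho> * (1 + f t)) at_top"
    by (auto simp: eventually_at_top_linorder)
  then show ?thesis using inf by (simp add: to_tm_def)
qed

lemma growth_ratio_finite:
  assumes fin: "tm = ereal T" and f_lim: "filterlim f at_top (to_tm tm)"
    and l: "0 < l" "l < 1" and \<rho>: "0 < \<rho>"
  shows "eventually (\<lambda>t. 1 + f (max t0 (l*t)) \<le> \<rho> * (1 + f t)) (to_tm tm)"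
proof -
  have "t0 < T" using htm fin by simp
  define S where "S = max t0 (l*T)"
  have SI: "S \<in> I" using \<open>t0 < T\<close> l ht0 fin unfolding S_def by (auto simp: ivl_def)
  have "eventually (\<lambda>t. (1 + f S) / \<rho> - 1 \<le> f t \<and> t \<in> I) (to_tm tm)"
    using f_lim eventually_in_ivl_to_tm[OF htm] unfolding filterlim_at_top by (intro eventually_conj) auto
  then show ?thesis
  proof (rule eventually_mono)
    fix t assume t: "(1 + f S) / \<rho> - 1 \<le> f t \<and> t \<in> I"
    then have "t < T" using fin by (simp add: ivl_def)
    then have "l * t \<le> l * T" using l by simp
    then have "max t0 (l*t) \<le> S" unfolding S_def by simp
    moreover have "max t0 (l*t) \<in> I"
      using atLeastAtMost_subset_ivl[OF t0_in_I SI] \<open>max t0 (l*t) \<le> S\<close> by auto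
    ultimately have "f (max t0 (l*t)) \<le> f S" using f_mono SI by blast
    moreover have "1 + f S \<le> \<rho> * (1 + f t)" using t \<rho> by (simp add: field_simps)
    ultimately show "1 + f (max t0 (l*t)) \<le> \<rho> * (1 + f t)" by simp
  qed
qed

lemma eventually_growth_ratio:
  assumes f_lim: "filterlim f at_top (to_tm tm)" and "0 < l" "l < 1" "0 < \<rho>"
  shows "eventually (\<lambda>t. 1 + f (max t0 (l*t)) \<le> \<rho> * (1 + f t)) (to_tm tm)"
proof (cases tm)
  case (real T)
  then show ?thesis using growth_ratio_finite[OF _ f_lim assms(2-4)] by blast
next
  case PInf
  then show ?thesis using growth_ratio_infinite assms(2-4) by blast
qed (use htm in simp)

section \<open>Blow-up at a finite end point\<close>

lemma f1_bounded_of_f_bounded: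
  assumes fin: "tm = ereal T" and f_le: "\<And>t. t \<in> I \<Longrightarrow> f t \<le> M"
  obtains F1 where "\<And>t. t \<in> I \<Longrightarrow> f1 t \<le> F1"
proof -
  have I: "I = {t0..<T}" using fin by (simp add: ivl_ereal)
  have M: "M \<ge> 0" using f_le[OF t0_in_I] f_pos[OF t0_in_I] by simp
  define K where "K = 2*b * T powr (2*a-2) * M"
  have "K * f t0 - energy t0 \<le> K * f t - energy t" if t: "t \<in> I" for t
  proof (rule ivl_deriv_nonneg_imp_le[OF _ t0_in_I t])
    show "((\<lambda>x. K * f x - energy x) has_real_derivative
        K * f1 x - 2*b * x powr (2*a-2) * f x * (1 + f x) powr (1-2*c) * f1 x) (at x within I)"
      if "x \<in> I" for x
      by (intro DERIV_diff DERIV_cmult f_deriv has_real_derivative_energy that)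
    show "t0 \<le> t" using t by (simp add: I)
    fix x assume x: "t0 < x" "x < t"
    then have xI: "x \<in> I" using t by (simp add: I)
    have "(1 + f x) powr (1-2*c) \<le> (1 + f x) powr 0" using f_pos[OF xI] hc1 by (intro powr_mono) auto
    then have "(1 + f x) powr (1-2*c) \<le> 1" using f_pos[OF xI] by simp
    moreover have "x powr (2*a-2) \<le> T powr (2*a-2)" using xI pos_of_in_I[OF xI] ha by (intro powr_mono2) (auto simp: I)
    ultimately have "x powr (2*a-2) * f x * (1 + f x) powr (1-2*c) \<le> T powr (2*a-2) * M * 1"
      using f_le[OF xI] f_pos[OF xI] M by (intro mult_mono) auto
    then have "2*b * (x powr (2*a-2) * f x * (1 + f x) powr (1-2*c)) * f1 x \<le> K * f1 x"
      unfolding K_def using hb f1_pos[OF xI] by (intro mult_right_mono) auto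
    then show "0 \<le> K * f1 x - 2*b * x powr (2*a-2) * f x * (1 + f x) powr (1-2*c) * f1 x"
      by (simp add: algebra_simps)
  qed
  moreover have "K \<ge> 0" unfolding K_def using hb M by simp
  ultimately have energy_le: "energy t \<le> energy t0 + K * (M - \<beta>)" if "t \<in> I" for t
    using that f_le[OF that] hinit mult_left_mono[of "f t" M K] by (fastforce simp: algebra_simps)
  define Q where "Q = (energy t0 + K * (M - \<beta>)) * (1 + M) powr (2*c) / t0 powr (2*a)"
  show ?thesis
  proof (rule that[of "sqrt Q"])
    fix t assume t: "t \<in> I"
    have u: "1 + f t > 0" and tp: "t > 0" using f_pos[OF t] pos_of_in_I[OF t] by auto
    have "energy t \<ge> 0" unfolding energy_def by simp
    have sq: "(f1 t)\<^sup>2 = energy t * (1 + f t) powr (2*c) / t powr (2*a)"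
      unfolding energy_def using tp u by (simp add: field_simps)
    have "energy t * (1 + f t) powr (2*c) \<le> (energy t0 + K * (M - \<beta>)) * (1 + M) powr (2*c)"
      using energy_le[OF t] \<open>energy t \<ge> 0\<close> f_le[OF t] u hc1 by (intro mult_mono powr_mono2) auto
    moreover have "t0 powr (2*a) \<le> t powr (2*a)" using t ht0 ha by (intro powr_mono2) (auto simp: I)
    moreover have "0 \<le> energy t * (1 + f t) powr (2*c)" using \<open>energy t \<ge> 0\<close> by simp
    ultimately have "(f1 t)\<^sup>2 \<le> Q" unfolding sq Q_def using ht0
      by (intro frac_le) auto
    then show "f1 t \<le> sqrt Q" using real_sqrt_le_mono[of "(f1 t)\<^sup>2" Q] by simp
  qed
qed

lemma limits_at_finite_end:
  assumes fin: "tm = ereal T" and f_le: "\<And>t. t \<in> I \<Longrightarrow> f t \<le> M"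
  obtains L1 L2 where "0 < L1" "(f \<longlongrightarrow> L1) (at_left T)" "(f1 \<longlongrightarrow> L2) (at_left T)"
    "(f2 \<longlongrightarrow> ode_rhs a b c T L1 L2) (at_left T)"
proof -
  have I: "I = {t0..<T}" using fin by (simp add: ivl_ereal)
  have tT: "t0 < T" using htm fin by simp
  have near_T: "eventually (\<lambda>t. t \<in> I) (at_left T)"
    using eventually_at_left_real[OF tT] by eventually_elim (simp add: I)
  obtain L1 where f_lim: "(f \<longlongrightarrow> L1) (at_left T)"
    by (rule mono_bounded_tendsto_at_left[OF tT, of f M]) (use f_mono f_le in \<open>auto simp: I\<close>)
  have "\<beta> \<le> L1"
    by (rule tendsto_lowerbound[OF f_lim]) (use near_T f_ge_beta in \<open>auto elim: eventually_mono\<close>)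
  then have L1: "0 < L1" using h\<beta> by simp
  obtain F1 where F1: "\<And>t. t \<in> I \<Longrightarrow> f1 t \<le> F1" using f1_bounded_of_f_bounded[OF fin f_le] by blast
  define K where "K = a / t0 * F1"
  have K: "K \<ge> 0" unfolding K_def using F1[OF t0_in_I] f1_pos[OF t0_in_I] ha ht0 by simp
  have f2_ge: "f2 t \<ge> - K" if t: "t \<in> I" for t
  proof -
    have "a / t * f1 t \<le> a / t0 * F1"
      using F1[OF t] f1_pos[OF t] ha t ht0 by (intro mult_mono divide_left_mono) (auto simp: I)
    moreover have "b / t\<^sup>2 * f t * (1 + f t) \<ge> 0" using hb f_pos[OF t] by simp
    moreover have "c * (f1 t)\<^sup>2 / (1 + f t) \<ge> 0" using hc1 f_pos[OF t] by simp
    ultimately show ?thesis unfolding K_def using f2_eq[OF t] by (simp add: ode_rhs_def)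
  qed
  have "f1 x + K * x \<le> f1 y + K * y" if "t0 \<le> x" "x \<le> y" "y < T" for x y
  proof (rule ivl_deriv_nonneg_imp_le[where F = "\<lambda>t. f1 t + K * t"])
    show "((\<lambda>t. f1 t + K * t) has_real_derivative f2 t + K) (at t within I)" if "t \<in> I" for t
      using that by (auto intro!: derivative_eq_intros f1_deriv)
    show "0 \<le> f2 t + K" if "x < t" "t < y" for t
      using f2_ge[of t] that \<open>t0 \<le> x\<close> \<open>y < T\<close> by (simp add: I)
  qed (use that in \<open>auto simp: I\<close>)
  moreover have "f1 x + K * x \<le> F1 + K * T" if "t0 \<le> x" "x < T" for x
    using F1[of x] K that mult_left_mono[of x T K] by (simp add: I)
  ultimately obtain Lg where "((\<lambda>t. f1 t + K * t) \<longlongrightarrow> Lg) (at_left T)"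
    using mono_bounded_tendsto_at_left[OF tT, of "\<lambda>t. f1 t + K * t"] by blast
  then have "((\<lambda>t. (f1 t + K * t) - K * t) \<longlongrightarrow> Lg - K * T) (at_left T)"
    by (intro tendsto_intros)
  then have f1_lim: "(f1 \<longlongrightarrow> Lg - K * T) (at_left T)" by simp
  have "((\<lambda>t. ode_rhs a b c t (f t) (f1 t)) \<longlongrightarrow> ode_rhs a b c T L1 (Lg - K * T)) (at_left T)"
    unfolding ode_rhs_def using tT ht0 L1 by (intro tendsto_intros f_lim f1_lim) auto
  then have "(f2 \<longlongrightarrow> ode_rhs a b c T L1 (Lg - K * T)) (at_left T)"
    by (rule Lim_transform_eventually) (use near_T f2_eq in \<open>auto elim: eventually_mono\<close>)
  with L1 f_lim f1_lim show ?thesis using that by blast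
qed

text \<open>A bounded \<open>f\<close> on a finite interval has limits of \<open>f, f1, f2\<close> at the end point;
  gluing the local solution started from these limits extends \<open>f\<close> past \<open>tm\<close>.\<close>
lemma bounded_solution_extends:
  assumes fin: "tm = ereal T" and f_le: "\<And>t. t \<in> I \<Longrightarrow> f t \<le> M"
  shows "\<exists>t'>tm. \<exists>h. ode_sol a b c t0 \<beta> \<beta>0 (ivl t0 t') h \<and> (\<forall>t\<in>I. h t = f t)"
proof -
  have I: "I = {t0..<T}" using fin by (simp add: ivl_ereal)
  have tT: "t0 < T" using htm fin by simp
  have T: "0 < T" using tT ht0 by simp
  obtain L1 L2 where L1: "0 < L1" and f_lim: "(f \<longlongrightarrow> L1) (at_left T)"
    and f1_lim: "(f1 \<longlongrightarrow> L2) (at_left T)" and f2_lim: "(f2 \<longlongrightarrow> ode_rhs a b c T L1 L2) (at_left T)"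
    using limits_at_finite_end[OF fin f_le] by blast
  obtain \<delta> y z where \<delta>: "0 < \<delta>" and yT: "y T = L1" and zT: "z T = L2"
    and y_deriv: "\<And>t. t \<in> {T..T+\<delta>} \<Longrightarrow> (y has_real_derivative z t) (at t within {T..T+\<delta>})"
    and z_deriv: "\<And>t. t \<in> {T..T+\<delta>} \<Longrightarrow>
      (z has_real_derivative ode_rhs a b c t (y t) (z t)) (at t within {T..T+\<delta>})"
    and y_near: "\<And>t. t \<in> {T..T+\<delta>} \<Longrightarrow> \<bar>y t - L1\<bar> \<le> 1"
    using ode_rhs_local_solution[OF T _ _ _ L1, of a b c L2] ha hb hc1 by auto
  define J where "J = ivl t0 (ereal (T + \<delta>))"
  have J: "J = {t0..<T+\<delta>}" unfolding J_def by (simp add: ivl_ereal)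
  define h where "h t = (if t < T then f t else y t)" for t
  define h1 where "h1 t = (if t < T then f1 t else z t)" for t
  define h2 where "h2 t = (if t < T then f2 t else ode_rhs a b c t (y t) (z t))" for t
  have h_deriv: "(h has_real_derivative h1 t) (at t within J)" if "t \<in> J" for t
    unfolding h_def[abs_def] h1_def J
    by (rule has_real_derivative_glue[OF tT \<delta> _ y_deriv])
      (use that f_deriv f_lim f1_lim yT zT in \<open>auto simp: I J\<close>)
  have h1_deriv: "(h1 has_real_derivative h2 t) (at t within J)" if "t \<in> J" for t
    unfolding h1_def[abs_def] h2_def J
    by (rule has_real_derivative_glue[OF tT \<delta> _ z_deriv])
      (use that f1_deriv f1_lim f2_lim yT zT in \<open>auto simp: I J\<close>)
  have "continuous_on {T..T+\<delta>} (\<lambda>t. ode_rhs a b c t (y t) (z t))"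
    unfolding ode_rhs_def using T L1 y_near
    by (intro continuous_intros DERIV_continuous_on[OF y_deriv] DERIV_continuous_on[OF z_deriv])
      (force simp: abs_le_iff)+
  then have h2_cont: "continuous_on J h2"
    unfolding h2_def[abs_def] J
    by (rule continuous_on_glue[OF tT \<delta> hf2c[unfolded I]]) (use f2_lim yT zT in simp)
  have "h2 t + a / t * h1 t - b / t\<^sup>2 * h t * (1 + h t) - c * (h1 t)\<^sup>2 / (1 + h t) = 0"
    if "t \<in> J" for t
    using hode that unfolding h_def h1_def h2_def ode_rhs_def by (auto simp: I J)
  then have "ode_sol a b c t0 \<beta> \<beta>0 J h"
    unfolding ode_sol_def using h_deriv h1_deriv h2_cont tT hinit
    by (intro exI[of _ h1] exI[of _ h2]) (simp add: h_def h1_def)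
  moreover have "\<forall>t\<in>I. h t = f t" by (simp add: h_def I)
  moreover have "ereal (T + \<delta>) > tm" using fin \<delta> by simp
  ultimately show ?thesis unfolding J_def by blast
qed

lemma f_tendsto_infinity:
  assumes maximal: "\<forall>t'::ereal. t' > tm \<longrightarrow>
    \<not> (\<exists>h. ode_sol a b c t0 \<beta> \<beta>0 (ivl t0 t') h \<and> (\<forall>t\<in>ivl t0 tm. h t = f t))"
  shows "filterlim f at_top (to_tm tm)"
proof (cases tm)
  case (real T)
  show ?thesis unfolding filterlim_at_top
  proof (rule allI, rule ccontr)
    fix M assume not_ev: "\<not> eventually (\<lambda>t. M \<le> f t) (to_tm tm)"
    have "f t \<le> M" if t: "t \<in> I" for t
    proof (rule ccontr)
      assume "\<not> f t \<le> M"
      then have "\<forall>s\<in>I. t \<le> s \<longrightarrow> M \<le> f s" using f_mono t by force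
      then show False using not_ev t unfolding eventually_to_tm_iff[OF htm] by blast
    qed
    then show False using bounded_solution_extends[OF real] maximal by blast
  qed
next
  case PInf
  then show ?thesis by (rule f_tendsto_infinity_infinite)
qed (use htm in simp)

section \<open>The weight \<open>g\<close> and the function \<open>\<eta>\<close>\<close>

definition weight :: "real \<Rightarrow> real" where
  "weight s = f s * (1 + f s) / (s\<^sup>2 * f1 s)"

definition weight_integral :: "real \<Rightarrow> real" where
  "weight_integral t = integral {t0..t} weight"

lemma weight_continuous: "continuous_on I weight"
  unfolding weight_def[abs_def]
proof (intro continuous_intros f_continuous f1_continuous ballI)
  fix x assume "x \<in> I"
  then show "x\<^sup>2 * f1 x \<noteq> 0" using pos_of_in_I f1_pos by (metis mult_pos_pos less_irrefl zero_less_power)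
qed

lemma has_real_derivative_weight_integral:
  assumes t: "t \<in> I" shows "(weight_integral has_real_derivative weight t) (at t within I)"
proof -
  have "ereal t < tm" using t by (simp add: ivl_def)
  then obtain r where r: "ereal t < ereal r" "ereal r < tm" using ereal_dense2 by blast
  have "r \<in> I" using r t by (auto simp: ivl_def)
  then have sub: "{t0..r} \<subseteq> I" by (rule atLeastAtMost_subset_ivl[OF t0_in_I])
  have tr: "t \<in> {t0..r}" using t r by (auto simp: ivl_def)
  have "(weight_integral has_real_derivative weight t) (at t within {t0..r})"
    using integral_has_vector_derivative[OF continuous_on_subset[OF weight_continuous sub] tr]
    unfolding weight_integral_def[abs_def] by (simp add: has_real_derivative_iff_has_vector_derivative)
  moreover have "at t within {t0..r} = at t within I"
    by (rule at_within_nhd[of _ "{..<r}"]) (use r sub in \<open>auto simp: ivl_def subset_iff\<close>)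
  ultimately show ?thesis by simp
qed

lemma weight_integral_continuous: "continuous_on I weight_integral"
  using DERIV_continuous_on has_real_derivative_weight_integral by blast

lemma exists_margin_parameters:
  assumes k: "0 < k" "k < 2*b / (3 - 2*c)"
  obtains \<epsilon> l \<rho> where "0 < \<epsilon>" "\<epsilon> < 1" "0 < l" "l < 1" "0 < \<rho>"
    "1 / (3 - 2*c) - potential_const * \<rho> powr (3 - 2*c) \<ge> 0"
    "k \<le> (1 - \<epsilon>) * (2*b * l powr (2*a-2) * (1 / (3 - 2*c) - potential_const * \<rho> powr (3 - 2*c)))"
proof -
  have c: "3 - 2*c > 0" "2*c - 2 > 0" using hc1 hc2 by auto
  define \<gamma> where "\<gamma> = k * (3 - 2*c) / (2*b)"
  have \<gamma>: "0 < \<gamma>" "\<gamma> < 1" unfolding \<gamma>_def using k c hb by (simp_all add: field_simps)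
  define \<delta> where "\<delta> = (1 - \<gamma>) / 4"
  have \<delta>: "0 < \<delta>" "\<delta> < 1/4" unfolding \<delta>_def using \<gamma> by auto
  define l where "l = (1 - \<delta>) powr (1 / (2*a-2))"
  have l_pow: "l powr (2*a-2) = 1 - \<delta>" unfolding l_def using \<delta> ha by (simp add: powr_powr)
  have l: "0 < l" "l < 1"
  proof -
    show "0 < l" unfolding l_def using \<delta> by simp
    show "l < 1"
    proof (rule ccontr)
      assume "\<not> l < 1"
      then have "l powr (2*a-2) \<ge> 1" using ha by (intro ge_one_powr_ge_zero) auto
      then show False using l_pow \<delta> by simp
    qed
  qed
  have "potential_const * (3 - 2*c) = 1 / (3 - 2*c) * (3 - 2*c) + 1 / (2*c - 2) * (3 - 2*c)"
    unfolding potential_const_def by (simp add: distrib_right)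
  then have KH: "potential_const * (3 - 2*c) = 1 + (3 - 2*c) / (2*c - 2)" using c by simp
  have KH_pos: "potential_const > 0" unfolding potential_const_def using c by (intro add_pos_pos) auto
  define q where "q = \<delta> / (potential_const * (3 - 2*c))"
  have "(3 - 2*c) / (2*c - 2) > 0" using c by simp
  then have KH1: "potential_const * (3 - 2*c) > 1" using KH by linarith
  have q: "0 < q" "q < 1" unfolding q_def using \<delta> KH1 by (auto simp: divide_less_eq)
  define \<rho> where "\<rho> = q powr (1 / (3 - 2*c))"
  have \<rho>_pow: "\<rho> powr (3 - 2*c) = q" unfolding \<rho>_def using q c by (simp add: powr_powr)
  have B: "1 / (3 - 2*c) - potential_const * \<rho> powr (3 - 2*c) = (1 - \<delta>) / (3 - 2*c)"
  proof -
    have "potential_const * (\<delta> / (potential_const * (3 - 2*c))) = \<delta> / (3 - 2*c)" using KH_pos by simp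
    then show ?thesis unfolding \<rho>_pow q_def by (simp add: diff_divide_distrib)
  qed
  have "(1 - \<delta>)^3 \<ge> 1 - 3*\<delta>"
  proof -
    have "(1 - \<delta>)^3 - (1 - 3*\<delta>) = \<delta>\<^sup>2 * (3 - \<delta>)" by (simp add: power3_eq_cube power2_eq_square algebra_simps)
    moreover have "\<delta>\<^sup>2 * (3 - \<delta>) \<ge> 0" using \<delta> by simp
    ultimately show ?thesis by linarith
  qed
  moreover have "1 - 3*\<delta> \<ge> \<gamma>" unfolding \<delta>_def using \<gamma> by (simp add: field_simps)
  ultimately have "\<gamma> \<le> (1 - \<delta>)^3" by linarith
  then have "k \<le> (1 - \<delta>)^3 * (2*b / (3 - 2*c))"
    unfolding \<gamma>_def using hb c by (simp add: field_simps)
  also have "\<dots> = (1 - \<delta>) * (2*b * l powr (2*a-2) * (1 / (3 - 2*c) - potential_const * \<rho> powr (3 - 2*c)))"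
    unfolding B l_pow by (simp add: power3_eq_cube field_simps)
  finally have "k \<le> (1 - \<delta>) * (2*b * l powr (2*a-2) * (1 / (3 - 2*c) - potential_const * \<rho> powr (3 - 2*c)))" .
  moreover have "0 < \<rho>" unfolding \<rho>_def using q by simp
  moreover have "1 / (3 - 2*c) - potential_const * \<rho> powr (3 - 2*c) \<ge> 0" unfolding B using \<delta> c by simp
  ultimately show ?thesis using \<delta> l by (intro that[of \<delta> l \<rho>]) auto
qed

lemma eventually_weight_le:
  assumes f_lim: "filterlim f at_top (to_tm tm)" and k: "0 \<le> k"
    and p: "0 < l" "l < 1" "0 < \<rho>" "\<epsilon> < 1"
      "1 / (3 - 2*c) - potential_const * \<rho> powr (3 - 2*c) \<ge> 0"
      "k \<le> (1 - \<epsilon>) * (2*b * l powr (2*a-2) * (1 / (3 - 2*c) - potential_const * \<rho> powr (3 - 2*c)))"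
  shows "eventually (\<lambda>t. k * weight t \<le> (1 - \<epsilon>) * (f1 t / (1 + f t))) (to_tm tm)"
  using eventually_conj[OF eventually_growth_ratio[OF f_lim p(1-3)] eventually_in_ivl_to_tm[OF htm]]
proof (rule eventually_mono)
  fix t assume "1 + f (max t0 (l*t)) \<le> \<rho> * (1 + f t) \<and> t \<in> I"
  then have ratio: "1 + f (max t0 (l*t)) \<le> \<rho> * (1 + f t)" and t: "t \<in> I" by auto
  define Q where "Q = 2*b * l powr (2*a-2) * (1 / (3 - 2*c) - potential_const * \<rho> powr (3 - 2*c))"
  have f: "f t > 0" and f1: "f1 t > 0" and tp: "t > 0" using f_pos f1_pos pos_of_in_I t by auto
  have "k * (f t * (1 + f t)^2) \<le> k * (1 + f t)^3"
    using k f by (intro mult_left_mono) (auto simp: power2_eq_square power3_eq_cube)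
  also have "\<dots> \<le> (1 - \<epsilon>) * Q * (1 + f t)^3" using p(6) f unfolding Q_def by (intro mult_right_mono) auto
  also have "\<dots> \<le> (1 - \<epsilon>) * (t\<^sup>2 * (f1 t)\<^sup>2)"
    using deriv_sq_lower_bound[OF t p(1,2,3) ratio p(5)] p(4) unfolding Q_def
    by (simp add: mult.assoc mult_left_mono)
  finally have "k * (f t * (1 + f t)^2) \<le> (1 - \<epsilon>) * (t\<^sup>2 * (f1 t)\<^sup>2)" .
  then have "k * (f t * (1 + f t)^2) / (t\<^sup>2 * f1 t * (1 + f t))
      \<le> (1 - \<epsilon>) * (t\<^sup>2 * (f1 t)\<^sup>2) / (t\<^sup>2 * f1 t * (1 + f t))"
    using f f1 tp by (intro divide_right_mono) auto
  moreover have "k * (f t * (1 + f t)^2) / (t\<^sup>2 * f1 t * (1 + f t))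
      = k * (f t * (1 + f t)) * (1 + f t) / ((t\<^sup>2 * f1 t) * (1 + f t))"
    by (simp add: power2_eq_square mult.assoc)
  then have "k * (f t * (1 + f t)^2) / (t\<^sup>2 * f1 t * (1 + f t)) = k * weight t"
    unfolding weight_def using f by (simp only: mult_divide_mult_cancel_right) simp
  moreover have "(1 - \<epsilon>) * (t\<^sup>2 * (f1 t)\<^sup>2) / (t\<^sup>2 * f1 t * (1 + f t))
      = (1 - \<epsilon>) * f1 t * (t\<^sup>2 * f1 t) / ((1 + f t) * (t\<^sup>2 * f1 t))"
    by (simp add: power2_eq_square ac_simps)
  then have "(1 - \<epsilon>) * (t\<^sup>2 * (f1 t)\<^sup>2) / (t\<^sup>2 * f1 t * (1 + f t)) = (1 - \<epsilon>) * (f1 t / (1 + f t))"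
    using tp f1 by (simp only: mult_divide_mult_cancel_right) simp
  ultimately show "k * weight t \<le> (1 - \<epsilon>) * (f1 t / (1 + f t))" by simp
qed

definition eta :: "real \<Rightarrow> real \<Rightarrow> real" where
  "eta k t = exp (k * weight_integral t) / (1 + f t)"

lemma eta_pos: "t \<in> I \<Longrightarrow> eta k t > 0"
  unfolding eta_def using one_plus_f_pos by simp

lemma has_real_derivative_exp_weight_integral:
  "t \<in> I \<Longrightarrow> ((\<lambda>t. exp (k * weight_integral t)) has_real_derivative
     exp (k * weight_integral t) * (k * weight t)) (at t within I)"
  using DERIV_chain2[OF DERIV_exp DERIV_cmult[OF has_real_derivative_weight_integral]]
  by (simp add: mult.commute)

lemma eta_continuously_differentiable:
  "\<exists>\<eta>'. (\<forall>t\<in>I. (eta k has_real_derivative \<eta>' t) (at t within I)) \<and> continuous_on I \<eta>'"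
proof (intro exI conjI ballI)
  let ?E = "\<lambda>t. exp (k * weight_integral t)"
  show "(eta k has_real_derivative
      (?E t * (k * weight t) * (1 + f t) - ?E t * f1 t) / ((1 + f t) * (1 + f t))) (at t within I)"
    if "t \<in> I" for t
    unfolding eta_def[abs_def]
    by (rule DERIV_divide[OF has_real_derivative_exp_weight_integral one_plus_f_deriv])
      (use that one_plus_f_pos[OF that] in auto)
  show "continuous_on I (\<lambda>t. (?E t * (k * weight t) * (1 + f t) - ?E t * f1 t) / ((1 + f t) * (1 + f t)))"
    by (intro continuous_intros weight_integral_continuous weight_continuous f_continuous f1_continuous)
      (use one_plus_f_pos in \<open>fastforce\<close>)
qed

text \<open>Once \<open>k weight \<le> (1 - \<epsilon>) (ln (1 + f))'\<close>, the function \<open>exp (k weight_integral) (1 + f) powr (\<epsilon> - 1)\<close>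
  is non-increasing, so \<open>\<eta>\<close> decays like \<open>(1 + f) powr - \<epsilon>\<close>.\<close>
lemma eta_decay:
  assumes f_lim: "filterlim f at_top (to_tm tm)" and k: "0 < k" "k < 2*b / (3 - 2*c)"
  obtains \<epsilon> K T1 where "0 < \<epsilon>" "0 \<le> K" "T1 \<in> I"
    "\<And>t. t \<in> I \<Longrightarrow> T1 \<le> t \<Longrightarrow> eta k t \<le> K * (1 + f t) powr (- \<epsilon>)"
proof -
  obtain \<epsilon> l \<rho> where \<epsilon>: "0 < \<epsilon>" "\<epsilon> < 1" and p: "0 < l" "l < 1" "0 < \<rho>"
    "1 / (3 - 2*c) - potential_const * \<rho> powr (3 - 2*c) \<ge> 0"
    "k \<le> (1 - \<epsilon>) * (2*b * l powr (2*a-2) * (1 / (3 - 2*c) - potential_const * \<rho> powr (3 - 2*c)))"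
    using exists_margin_parameters[OF k] by blast
  obtain T1 where T1: "T1 \<in> I" "\<And>t. t \<in> I \<Longrightarrow> T1 \<le> t \<Longrightarrow> k * weight t \<le> (1 - \<epsilon>) * (f1 t / (1 + f t))"
    using eventually_weight_le[OF f_lim _ p(1-3) \<epsilon>(2) p(4,5)] k
    unfolding eventually_to_tm_iff[OF htm] by auto
  define \<psi> where "\<psi> t = exp (k * weight_integral t) * (1 + f t) powr (\<epsilon> - 1)" for t
  have \<psi>_deriv: "((\<lambda>t. - \<psi> t) has_real_derivative
      - (\<psi> t * (k * weight t - (1 - \<epsilon>) * (f1 t / (1 + f t))))) (at t within I)" if t: "t \<in> I" for t
  proof -
    have u: "1 + f t > 0" using f_pos[OF t] by simp
    have D: "(\<psi> has_real_derivative exp (k * weight_integral t) * (k * weight t) * (1 + f t) powr (\<epsilon> - 1)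
        + (\<epsilon> - 1) * (1 + f t) powr (\<epsilon> - 1 - 1) * f1 t * exp (k * weight_integral t)) (at t within I)"
      unfolding \<psi>_def[abs_def]
      by (rule DERIV_mult[OF has_real_derivative_exp_weight_integral[OF t]
          DERIV_chain2[where g="\<lambda>x. 1 + f x", OF has_real_derivative_powr[OF u] one_plus_f_deriv[OF t]]])
    have "(1 + f t) powr (\<epsilon> - 1 - 1) = (1 + f t) powr (\<epsilon> - 1) / (1 + f t)"
      using u powr_diff[of "1 + f t" "\<epsilon> - 1" 1] by simp
    moreover have "E * K * P + (\<epsilon> - 1) * (P / (1 + f t)) * f1 t * E = E * P * (K - (1 - \<epsilon>) * (f1 t / (1 + f t)))"
      for E K P using u by (simp add: field_simps)
    ultimately have "exp (k * weight_integral t) * (k * weight t) * (1 + f t) powr (\<epsilon> - 1)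
        + (\<epsilon> - 1) * (1 + f t) powr (\<epsilon> - 1 - 1) * f1 t * exp (k * weight_integral t)
      = \<psi> t * (k * weight t - (1 - \<epsilon>) * (f1 t / (1 + f t)))"
      unfolding \<psi>_def by simp
    then show ?thesis using DERIV_minus[OF D] by simp
  qed
  have \<psi>_le: "\<psi> t \<le> \<psi> T1" if t: "t \<in> I" "T1 \<le> t" for t
  proof -
    have "- \<psi> T1 \<le> - \<psi> t"
    proof (rule ivl_deriv_nonneg_imp_le[OF \<psi>_deriv T1(1) t])
      fix x assume "T1 < x" "x < t"
      then have xI: "x \<in> I" using atLeastAtMost_subset_ivl[OF T1(1) t(1)] by auto
      have "\<psi> x \<ge> 0" unfolding \<psi>_def by simp
      then show "0 \<le> - (\<psi> x * (k * weight x - (1 - \<epsilon>) * (f1 x / (1 + f x))))"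
        using T1(2)[OF xI] \<open>T1 < x\<close> by (simp add: mult_nonneg_nonpos)
    qed
    then show ?thesis by simp
  qed
  show ?thesis
  proof (rule that[OF \<epsilon>(1) _ T1(1)])
    show "0 \<le> \<psi> T1" unfolding \<psi>_def by simp
    fix t assume t: "t \<in> I" "T1 \<le> t"
    have u: "1 + f t > 0" using f_pos[OF t(1)] by simp
    have "eta k t = \<psi> t * (1 + f t) powr (- \<epsilon>)"
      unfolding eta_def \<psi>_def using u by (simp add: powr_diff powr_minus field_simps)
    also have "\<dots> \<le> \<psi> T1 * (1 + f t) powr (- \<epsilon>)" using \<psi>_le[OF t] by (intro mult_right_mono) auto
    finally show "eta k t \<le> \<psi> T1 * (1 + f t) powr (- \<epsilon>)" .
  qed
qed

lemma eta_bounded: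
  assumes f_lim: "filterlim f at_top (to_tm tm)" and k: "0 < k" "k < 2*b / (3 - 2*c)"
  obtains C where "0 < C" "\<And>t. t \<in> I \<Longrightarrow> eta k t \<le> C"
proof -
  obtain \<epsilon> K T1 where \<epsilon>: "0 < \<epsilon>" and K: "0 \<le> K" and T1: "T1 \<in> I"
    and decay: "\<And>t. t \<in> I \<Longrightarrow> T1 \<le> t \<Longrightarrow> eta k t \<le> K * (1 + f t) powr (- \<epsilon>)"
    using eta_decay[OF f_lim k] by blast
  have sub: "{t0..T1} \<subseteq> I" using atLeastAtMost_subset_ivl[OF t0_in_I T1] .
  obtain \<eta>' where "\<forall>t\<in>I. (eta k has_real_derivative \<eta>' t) (at t within I)"
    using eta_continuously_differentiable by blast
  then have "continuous_on {t0..T1} (eta k)"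
    using DERIV_continuous_on continuous_on_subset[OF _ sub] by blast
  moreover have "{t0..T1} \<noteq> {}" using T1 by (simp add: ivl_def)
  ultimately obtain x where x: "x \<in> {t0..T1}" "\<And>y. y \<in> {t0..T1} \<Longrightarrow> eta k y \<le> eta k x"
    using continuous_attains_sup[OF compact_Icc] by blast
  show ?thesis
  proof (rule that[of "max (eta k x) K"])
    show "0 < max (eta k x) K" using eta_pos[of x k] x sub by (auto simp: less_max_iff_disj)
    fix t assume t: "t \<in> I"
    show "eta k t \<le> max (eta k x) K"
    proof (cases "t \<le> T1")
      case True
      then show ?thesis using x(2)[of t] t by (simp add: ivl_def le_max_iff_disj)
    next
      case False
      have "(1 + f t) powr (- \<epsilon>) \<le> 1"
        using one_plus_f_pos[OF t] f_pos[OF t] \<epsilon> by (simp add: powr_minus inverse_le_1_iff ge_one_powr_ge_zero)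
      then have "K * (1 + f t) powr (- \<epsilon>) \<le> K" using K mult_left_le by blast
      then show ?thesis using decay[OF t] False by (simp add: le_max_iff_disj)
    qed
  qed
qed

lemma eta_tendsto_zero:
  assumes f_lim: "filterlim f at_top (to_tm tm)" and k: "0 < k" "k < 2*b / (3 - 2*c)"
  shows "(eta k \<longlongrightarrow> 0) (to_tm tm)"
proof -
  obtain \<epsilon> K T1 where \<epsilon>: "0 < \<epsilon>" and T1: "T1 \<in> I"
    and decay: "\<And>t. t \<in> I \<Longrightarrow> T1 \<le> t \<Longrightarrow> eta k t \<le> K * (1 + f t) powr (- \<epsilon>)"
    using eta_decay[OF f_lim k] by blast
  have "filterlim (\<lambda>t. 1 + f t) at_top (to_tm tm)"
    by (rule filterlim_tendsto_add_at_top[OF tendsto_const f_lim])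
  then have "((\<lambda>t. K * (1 + f t) powr (- \<epsilon>)) \<longlongrightarrow> K * 0) (to_tm tm)"
    using \<epsilon> by (intro tendsto_mult tendsto_const tendsto_neg_powr) auto
  then have upper: "((\<lambda>t. K * (1 + f t) powr (- \<epsilon>)) \<longlongrightarrow> 0) (to_tm tm)" by simp
  have "eventually (\<lambda>t. 0 \<le> eta k t) (to_tm tm)"
    using eventually_in_ivl_to_tm[OF htm] by eventually_elim (simp add: eta_pos less_imp_le)
  moreover have "eventually (\<lambda>t. eta k t \<le> K * (1 + f t) powr (- \<epsilon>)) (to_tm tm)"
    unfolding eventually_to_tm_iff[OF htm] using T1 decay by blast
  ultimately show ?thesis by (rule tendsto_sandwich[OF _ _ tendsto_const upper])
qed

lemma eta_eq:
  "1 / (exp (- A * integral {t0..t} (\<lambda>s. f s * (1 + f s) / (s\<^sup>2 * f1 s))) powr \<theta> * (1 + f t))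
    = eta (A * \<theta>) t"
proof -
  have "exp (- A * weight_integral t) powr \<theta> = exp (- (A * \<theta> * weight_integral t))"
    by (simp add: powr_def algebra_simps)
  also have "\<dots> = 1 / exp (A * \<theta> * weight_integral t)" by (simp add: exp_minus inverse_eq_divide)
  finally have "exp (- A * weight_integral t) powr \<theta> = 1 / exp (A * \<theta> * weight_integral t)" .
  then show ?thesis unfolding eta_def weight_integral_def weight_def[abs_def] by simp
qed

end

theorem propositiont:
  fixes a b c t0 \<beta> \<beta>0 \<theta> A :: real and tm :: ereal
    and f f1 f2 :: "real \<Rightarrow> real"
  assumes ha: "a > 1" and hb: "b > 0" and hc: "1 < c" "c < 3/2"
    and ht0: "t0 > 0" and h\<beta>: "\<beta> > 0" "\<beta>0 > 0"
    and htm: "ereal t0 < tm"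
    and hf1: "\<forall>t\<in>ivl t0 tm. (f has_real_derivative f1 t) (at t within ivl t0 tm)"
    and hf2: "\<forall>t\<in>ivl t0 tm. (f1 has_real_derivative f2 t) (at t within ivl t0 tm)"
    and hf2c: "continuous_on (ivl t0 tm) f2"
    and hode: "\<forall>t\<in>ivl t0 tm. f2 t + a / t * f1 t - b / t\<^sup>2 * f t * (1 + f t)
                                - c * (f1 t)\<^sup>2 / (1 + f t) = 0"
    and hinit: "f t0 = \<beta>" "f1 t0 = \<beta>0"
    and hmax: "\<forall>t'::ereal. t' > tm \<longrightarrow>
                 \<not> (\<exists>h. ode_sol a b c t0 \<beta> \<beta>0 (ivl t0 t') h \<and> (\<forall>t\<in>ivl t0 tm. h t = f t))"
    and h\<theta>: "\<theta> \<ge> 1" and hA: "A > 0" and hA\<theta>: "A * \<theta> < 2 * b / (3 - 2 * c)"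
  shows "let g = (\<lambda>t. exp (- A * integral {t0..t} (\<lambda>s. f s * (1 + f s) / (s\<^sup>2 * f1 s))));
             \<eta> = (\<lambda>t. 1 / (g t powr \<theta> * (1 + f t)))
         in (\<exists>\<eta>'. (\<forall>t\<in>ivl t0 tm. (\<eta> has_real_derivative \<eta>' t) (at t within ivl t0 tm))
                   \<and> continuous_on (ivl t0 tm) \<eta>')
          \<and> (\<exists>C>0. \<forall>t\<in>ivl t0 tm. 0 < \<eta> t \<and> \<eta> t \<le> C)
          \<and> (\<eta> \<longlongrightarrow> 0) (to_tm tm)"
proof -
  interpret ode_solution a b c t0 \<beta> \<beta>0 tm f f1 f2
    by unfold_locales (use assms in auto)
  have f_lim: "filterlim f at_top (to_tm tm)" by (rule f_tendsto_infinity[OF hmax])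
  have k: "0 < A * \<theta>" "A * \<theta> < 2 * b / (3 - 2 * c)" using hA h\<theta> hA\<theta> by auto
  obtain C where "0 < C" "\<And>t. t \<in> I \<Longrightarrow> eta (A * \<theta>) t \<le> C" using eta_bounded[OF f_lim k] by blast
  then show ?thesis
    unfolding Let_def eta_eq
    using eta_continuously_differentiable[of "A * \<theta>"] eta_pos eta_tendsto_zero[OF f_lim k] by blast
qed

end
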